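(* Let $D > d \geq 1$ be integers, let $\sigma > 0$, and let $\mathcal{S}_1, \mathcal{S}_2 \subset \mathbb{R}^D$ be two $d$-dimensional linear subspaces. Let $y = x + n$, where $x \in \mathcal{S}_1$ is fixed and $n \sim \mathcal{N}(0, \sigma^2 I_D)$. Define $$\mu(y) = 1 - \frac{\mathrm{dist}(y, \mathcal{S}_1)}{\mathrm{dist}(y, \mathcal{S}_2)}.$$ Then there is an absolute constant $c > 0$ such that for every $\varepsilon \in (0,1)$, with probability at least $1 - 4e^{-c\varepsilon^2 (D-d)}$, $$1 - \frac{(1+\varepsilon)\sqrt{\sigma^2 (D-d)}}{(1-\varepsilon)\sqrt{\sigma^2(D-d) + \mathrm{dist}(x,\mathcal{S}_2)^2}} \;\leq\; \mu(y) \;\leq\; 1 - \frac{(1-\varepsilon)\sqrt{\sigma^2 (D-d)}}{(1+\varepsilon)\sqrt{\sigma^2(D-d) + \mathrm{dist}(x,\mathcal{S}_2)^2}}.$$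
   Context: For a linear subspace $\mathcal{S} \subset \mathbb{R}^D$ with orthonormal basis matrix $U$, $\mathrm{dist}(z, \mathcal{S}) = \min_{w \in \mathcal{S}} \|z - w\|_2 = \|z - UU^T z\|_2$. *)

theory Defs
  imports "HOL-Probability.Probability"
begin

text \<open>Vectors of R^D are represented as functions nat => real; only the
components with index < D are meaningful.  Elements of subspaces are
normalised to vanish at indices >= D.\<close>

definition vecs :: "nat \<Rightarrow> (nat \<Rightarrow> real) set" where
  "vecs D = {v. \<forall>i\<ge>D. v i = 0}"

definition lin_subspace :: "nat \<Rightarrow> (nat \<Rightarrow> real) set \<Rightarrow> bool" where
  "lin_subspace D S \<longleftrightarrow> S \<subseteq> vecs D \<and> (\<lambda>_. 0) \<in> S \<and>
     (\<forall>v\<in>S. \<forall>w\<in>S. (\<lambda>i. v i + w i) \<in> S) \<and>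
     (\<forall>a::real. \<forall>v\<in>S. (\<lambda>i. a * v i) \<in> S)"

definition subspace_of_dim :: "nat \<Rightarrow> nat \<Rightarrow> (nat \<Rightarrow> real) set \<Rightarrow> bool" where
  "subspace_of_dim D d S \<longleftrightarrow> lin_subspace D S \<and>
     (\<exists>u :: nat \<Rightarrow> nat \<Rightarrow> real. (\<forall>j<d. u j \<in> S) \<and>
        (\<forall>a. (\<forall>i. (\<Sum>j<d. a j * u j i) = 0) \<longrightarrow> (\<forall>j<d. a j = 0)) \<and>
        (\<forall>v\<in>S. \<exists>a. v = (\<lambda>i. \<Sum>j<d. a j * u j i)))"

definition enorm :: "nat \<Rightarrow> (nat \<Rightarrow> real) \<Rightarrow> real" where
  "enorm D v = sqrt (\<Sum>i<D. (v i)\<^sup>2)"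

definition sdist :: "nat \<Rightarrow> (nat \<Rightarrow> real) \<Rightarrow> (nat \<Rightarrow> real) set \<Rightarrow> real" where
  "sdist D z S = Inf ((\<lambda>w. enorm D (\<lambda>i. z i - w i)) ` S)"

definition gauss_noise :: "nat \<Rightarrow> real \<Rightarrow> (nat \<Rightarrow> real) measure" where
  "gauss_noise D \<sigma> = PiM {..<D} (\<lambda>_. density lborel (normal_density 0 \<sigma>))"

definition affinity_mu :: "nat \<Rightarrow> (nat \<Rightarrow> real) set \<Rightarrow> (nat \<Rightarrow> real) set
    \<Rightarrow> (nat \<Rightarrow> real) \<Rightarrow> real" where
  "affinity_mu D S1 S2 y = 1 - sdist D y S1 / sdist D y S2"

end

theory Submission
  imports Defs
begin

text \<open>Take an orthonormal basis of \<open>\<real>\<^sup>D\<close> whose first \<open>d\<close> vectors span \<open>S\<close>. Then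
  \<open>dist(y, S)\<^sup>2\<close> is the sum of the squares of the last \<open>D - d\<close> coordinates of \<open>y\<close>, and for
  \<open>y = x + n\<close> these are Gaussians with variance \<open>\<sigma>\<^sup>2\<close>, so \<open>dist(y, S)\<^sup>2\<close> concentrates around
  \<open>\<sigma>\<^sup>2 (D - d) + dist(x, S)\<^sup>2\<close>. Chernoff bounds, with the exponential moments computed
  exactly as Gaussian integrals, make a relative deviation by \<open>\<epsilon>\<close> (resp. \<open>2\<epsilon>\<close>) have probability
  at most \<open>exp (- \<epsilon>\<^sup>2 (D - d) / 8)\<close> on either side. Outside these four events (two sides, two
  subspaces), using \<open>dist(x, S\<^sub>1) = 0\<close> and taking square roots bounds the ratio in \<open>\<mu>(y)\<close>,
  which gives the claim with \<open>c = 1/8\<close>.\<close>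

section \<open>Exponential moments of Gaussian quadratics\<close>

abbreviation normal_measure :: "real \<Rightarrow> real measure" where
  "normal_measure \<sigma> \<equiv> density lborel (normal_density 0 \<sigma>)"

lemma normal_density_mult_exp_quadratic:
  fixes \<sigma> b c x :: real
  assumes "\<sigma> > 0" "2 * c * \<sigma>\<^sup>2 < 1"
  defines "q \<equiv> 1 - 2 * c * \<sigma>\<^sup>2"
  defines "\<tau> \<equiv> \<sigma> / sqrt q"
  shows "normal_density 0 \<sigma> x * exp (b * x + c * x\<^sup>2) =
         (1 / sqrt q * exp (b\<^sup>2 * \<sigma>\<^sup>2 / (2 * q))) * normal_density (b * \<tau>\<^sup>2) \<tau> x"
proof -
  have q: "q > 0" using assms unfolding q_def by simp
  have \<tau>2: "\<tau>\<^sup>2 = \<sigma>\<^sup>2 / q" using q unfolding \<tau>_def by (simp add: power_divide)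
  have sqrt_var: "sqrt (2 * pi * \<tau>\<^sup>2) = sqrt (2 * pi * \<sigma>\<^sup>2) / sqrt q"
    using q by (simp add: \<tau>2 real_sqrt_divide real_sqrt_mult)
  have complete_square: "- x\<^sup>2 / (2 * \<sigma>\<^sup>2) + (b * x + c * x\<^sup>2) =
        b\<^sup>2 * \<sigma>\<^sup>2 / (2 * q) + (- (x - b * \<tau>\<^sup>2)\<^sup>2 / (2 * \<tau>\<^sup>2))"
  proof -
    have c: "c = (1 - q) / (2 * \<sigma>\<^sup>2)" using assms(1) unfolding q_def by (simp add: field_simps)
    show ?thesis using q assms(1) unfolding \<tau>2 c by (simp add: field_simps power2_eq_square)
  qed
  have "normal_density 0 \<sigma> x * exp (b * x + c * x\<^sup>2) =
     1 / sqrt (2 * pi * \<sigma>\<^sup>2) * exp (- x\<^sup>2 / (2 * \<sigma>\<^sup>2) + (b * x + c * x\<^sup>2))"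
    unfolding normal_density_def exp_add by simp
  also have "\<dots> = 1 / sqrt (2 * pi * \<sigma>\<^sup>2) * exp (b\<^sup>2 * \<sigma>\<^sup>2 / (2 * q)) *
                   exp (- (x - b * \<tau>\<^sup>2)\<^sup>2 / (2 * \<tau>\<^sup>2))"
    unfolding complete_square exp_add by simp
  also have "\<dots> = (1 / sqrt q * exp (b\<^sup>2 * \<sigma>\<^sup>2 / (2 * q))) * normal_density (b * \<tau>\<^sup>2) \<tau> x"
    unfolding normal_density_def sqrt_var using q by simp
  finally show ?thesis .
qed

lemma nn_integral_normal_exp_quadratic:
  fixes \<sigma> b c :: real
  assumes "\<sigma> > 0" "2 * c * \<sigma>\<^sup>2 < 1"
  shows "(\<integral>\<^sup>+x. ennreal (exp (b * x + c * x\<^sup>2)) \<partial>normal_measure \<sigma>) =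
    ennreal (1 / sqrt (1 - 2 * c * \<sigma>\<^sup>2) * exp (b\<^sup>2 * \<sigma>\<^sup>2 / (2 * (1 - 2 * c * \<sigma>\<^sup>2))))"
proof -
  define q where "q = 1 - 2 * c * \<sigma>\<^sup>2"
  define \<tau> where "\<tau> = \<sigma> / sqrt q"
  define K where "K = 1 / sqrt q * exp (b\<^sup>2 * \<sigma>\<^sup>2 / (2 * q))"
  have q: "q > 0" using assms unfolding q_def by simp
  have "(\<integral>\<^sup>+x. ennreal (exp (b * x + c * x\<^sup>2)) \<partial>normal_measure \<sigma>)
      = (\<integral>\<^sup>+x. ennreal (normal_density 0 \<sigma> x) * ennreal (exp (b * x + c * x\<^sup>2)) \<partial>lborel)"
    by (subst nn_integral_density) auto
  also have "\<dots> = (\<integral>\<^sup>+x. ennreal K * ennreal (normal_density (b * \<tau>\<^sup>2) \<tau> x) \<partial>lborel)"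
  proof (intro nn_integral_cong)
    fix x
    show "ennreal (normal_density 0 \<sigma> x) * ennreal (exp (b * x + c * x\<^sup>2)) =
          ennreal K * ennreal (normal_density (b * \<tau>\<^sup>2) \<tau> x)"
      using normal_density_mult_exp_quadratic[OF assms, where b=b and x=x] q
      by (simp add: K_def q_def \<tau>_def flip: ennreal_mult')
  qed
  also have "\<dots> = ennreal K * (\<integral>\<^sup>+x. ennreal (normal_density (b * \<tau>\<^sup>2) \<tau> x) \<partial>lborel)"
    by (rule nn_integral_cmult) auto
  also have "(\<integral>\<^sup>+x. ennreal (normal_density (b * \<tau>\<^sup>2) \<tau> x) \<partial>lborel) = 1"
    using q assms(1) unfolding \<tau>_def
    by (subst nn_integral_eq_integral) (auto intro: integrable_normal_density)
  finally show ?thesis by (simp add: K_def q_def)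
qed

lemma prob_space_normal_measure: "\<sigma> > 0 \<Longrightarrow> prob_space (normal_measure \<sigma>)"
  by (rule prob_space_normal_density)

lemma prob_space_PiM_normal_measure: "\<sigma> > 0 \<Longrightarrow> prob_space (PiM I (\<lambda>_. normal_measure \<sigma>))"
  by (intro prob_space_PiM prob_space_normal_measure)

lemma nn_integral_PiM_normal_exp_quadratic:
  fixes \<sigma> c :: real and b :: "nat \<Rightarrow> real"
  assumes "\<sigma> > 0" "2 * c * \<sigma>\<^sup>2 < 1"
  shows "(\<integral>\<^sup>+n. ennreal (exp (\<Sum>i<m. b i * n i + c * (n i)\<^sup>2)) \<partial>PiM {..<m} (\<lambda>_. normal_measure \<sigma>)) =
    ennreal ((1 / sqrt (1 - 2 * c * \<sigma>\<^sup>2)) ^ m *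
             exp (\<Sum>i<m. (b i)\<^sup>2 * \<sigma>\<^sup>2 / (2 * (1 - 2 * c * \<sigma>\<^sup>2))))"
proof -
  interpret product_prob_space "\<lambda>_. normal_measure \<sigma>"
    using prob_space_normal_measure[OF assms(1)]
    by (simp add: product_prob_space_def product_sigma_finite_def
        prob_space_imp_sigma_finite product_prob_space_axioms_def)
  have q: "1 - 2 * c * \<sigma>\<^sup>2 > 0" using assms by simp
  have "(\<integral>\<^sup>+n. ennreal (exp (\<Sum>i<m. b i * n i + c * (n i)\<^sup>2)) \<partial>PiM {..<m} (\<lambda>_. normal_measure \<sigma>)) =
     (\<integral>\<^sup>+n. (\<Prod>i<m. ennreal (exp (b i * n i + c * (n i)\<^sup>2))) \<partial>PiM {..<m} (\<lambda>_. normal_measure \<sigma>))"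
    by (simp add: exp_sum prod_ennreal)
  also have "\<dots> = (\<Prod>i<m. (\<integral>\<^sup>+x. ennreal (exp (b i * x + c * x\<^sup>2)) \<partial>normal_measure \<sigma>))"
    by (rule product_nn_integral_prod) auto
  also have "\<dots> = (\<Prod>i<m. ennreal (1 / sqrt (1 - 2 * c * \<sigma>\<^sup>2) *
                         exp ((b i)\<^sup>2 * \<sigma>\<^sup>2 / (2 * (1 - 2 * c * \<sigma>\<^sup>2)))))"
    using nn_integral_normal_exp_quadratic[OF assms] by simp
  also have "\<dots> = ennreal (\<Prod>i<m. 1 / sqrt (1 - 2 * c * \<sigma>\<^sup>2) *
                           exp ((b i)\<^sup>2 * \<sigma>\<^sup>2 / (2 * (1 - 2 * c * \<sigma>\<^sup>2))))"
    by (rule prod_ennreal) (use q in simp)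
  also have "(\<Prod>i<m. 1 / sqrt (1 - 2 * c * \<sigma>\<^sup>2) *
               exp ((b i)\<^sup>2 * \<sigma>\<^sup>2 / (2 * (1 - 2 * c * \<sigma>\<^sup>2)))) =
             (1 / sqrt (1 - 2 * c * \<sigma>\<^sup>2)) ^ m *
               exp (\<Sum>i<m. (b i)\<^sup>2 * \<sigma>\<^sup>2 / (2 * (1 - 2 * c * \<sigma>\<^sup>2)))"
    by (simp only: prod.distrib prod_constant card_lessThan finite_lessThan exp_sum)
  finally show ?thesis .
qed

text \<open>Hubbard--Stratonovich: a Gaussian integral turns the square in the exponent into a
  linear term.\<close>
lemma exp_sum_sq_eq_nn_integral_normal:
  fixes t :: real and w :: "nat \<Rightarrow> real"
  assumes "t \<ge> 0"
  shows "ennreal (exp (t * (\<Sum>j<k. (w j)\<^sup>2))) =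
    (\<integral>\<^sup>+g. ennreal (exp (\<Sum>j<k. sqrt (2 * t) * w j * g j)) \<partial>PiM {..<k} (\<lambda>_. normal_measure 1))"
  using nn_integral_PiM_normal_exp_quadratic[where \<sigma>=1 and c=0 and b="\<lambda>j. sqrt (2 * t) * w j" and m=k] assms
  by (simp add: power_mult_distrib sum_distrib_left)

section \<open>Orthonormal bases adapted to a subspace\<close>

definition vinner :: "nat \<Rightarrow> (nat \<Rightarrow> real) \<Rightarrow> (nat \<Rightarrow> real) \<Rightarrow> real" where
  "vinner D v w = (\<Sum>i<D. v i * w i)"

definition orthonormal :: "nat \<Rightarrow> nat \<Rightarrow> (nat \<Rightarrow> nat \<Rightarrow> real) \<Rightarrow> bool" where
  "orthonormal D k u \<longleftrightarrow> (\<forall>j<k. \<forall>l<k. vinner D (u j) (u l) = (if j = l then 1 else 0))"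

lemma vinner_comm: "vinner D v w = vinner D w v"
  unfolding vinner_def by (simp add: mult.commute)

lemma vinner_add_right: "vinner D v (\<lambda>i. x i + y i) = vinner D v x + vinner D v y"
  unfolding vinner_def by (simp add: algebra_simps sum.distrib)

lemma vinner_diff_right: "vinner D v (\<lambda>i. x i - y i) = vinner D v x - vinner D v y"
  unfolding vinner_def by (simp add: algebra_simps sum_subtractf)

lemma vinner_sum_right:
  "vinner D v (\<lambda>i. \<Sum>a\<in>A. c a * g a i) = (\<Sum>a\<in>A. c a * vinner D v (g a))"
proof -
  have "vinner D v (\<lambda>i. \<Sum>a\<in>A. c a * g a i) = (\<Sum>i<D. \<Sum>a\<in>A. c a * (v i * g a i))"
    unfolding vinner_def sum_distrib_left by (simp add: mult_ac)
  also have "\<dots> = (\<Sum>a\<in>A. \<Sum>i<D. c a * (v i * g a i))" by (rule sum.swap)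
  also have "\<dots> = (\<Sum>a\<in>A. c a * vinner D v (g a))" unfolding vinner_def sum_distrib_left ..
  finally show ?thesis .
qed

lemma vinner_cong_right: "(\<And>i. i < D \<Longrightarrow> w i = w' i) \<Longrightarrow> vinner D v w = vinner D v w'"
  unfolding vinner_def by simp

lemma vinner_self_nonneg: "vinner D v v \<ge> 0"
  unfolding vinner_def by (simp add: sum_nonneg)

lemma vinner_self_eq_0: "vinner D v v = 0 \<Longrightarrow> i < D \<Longrightarrow> v i = 0"
  unfolding vinner_def using sum_nonneg_eq_0_iff[of "{..<D}" "\<lambda>i. v i * v i"] by simp

lemma vinner_orthonormal_comb:
  assumes "orthonormal D k f" "l < k" "A \<subseteq> {..<k}"
  shows "vinner D (f l) (\<lambda>i. \<Sum>j\<in>A. c j * f j i) = (if l \<in> A then c l else 0)"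
proof -
  have "vinner D (f l) (\<lambda>i. \<Sum>j\<in>A. c j * f j i) = (\<Sum>j\<in>A. if j = l then c j else 0)"
    unfolding vinner_sum_right using assms unfolding orthonormal_def by (intro sum.cong) auto
  also have "\<dots> = (if l \<in> A then c l else 0)"
    using finite_subset[OF assms(3)] by (simp add: sum.delta')
  finally show ?thesis .
qed

lemma sum_sq_orthonormal_comb:
  assumes "orthonormal D k u"
  shows "(\<Sum>i<D. (\<Sum>j<k. g j * u j i)\<^sup>2) = (\<Sum>j<k. (g j)\<^sup>2)"
proof -
  have "(\<Sum>i<D. (\<Sum>j<k. g j * u j i)\<^sup>2) = (\<Sum>i<D. \<Sum>j<k. \<Sum>l<k. g j * g l * (u j i * u l i))"
    by (simp add: power2_eq_square sum_product algebra_simps)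
  also have "\<dots> = (\<Sum>j<k. \<Sum>l<k. g j * g l * vinner D (u j) (u l))"
    unfolding vinner_def by (simp add: sum_distrib_left sum.swap[of _ "{..<D}"])
  also have "\<dots> = (\<Sum>j<k. \<Sum>l<k. if l = j then g j * g j else 0)"
    using assms unfolding orthonormal_def by (intro sum.cong refl) auto
  also have "\<dots> = (\<Sum>j<k. (g j)\<^sup>2)"
    by (simp add: power2_eq_square)
  finally show ?thesis .
qed

lemma parseval:
  assumes "\<And>z i. i < D \<Longrightarrow> z i = (\<Sum>j<D. vinner D (f j) z * f j i)"
  shows "(\<Sum>i<D. (v i)\<^sup>2) = (\<Sum>j<D. (vinner D (f j) v)\<^sup>2)"
proof -
  have "(\<Sum>i<D. (v i)\<^sup>2) = (\<Sum>i<D. v i * (\<Sum>j<D. vinner D (f j) v * f j i))"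
    unfolding power2_eq_square by (intro sum.cong refl) (simp flip: assms)
  also have "\<dots> = (\<Sum>i<D. \<Sum>j<D. vinner D (f j) v * (f j i * v i))"
    by (simp add: sum_distrib_left mult_ac)
  also have "\<dots> = (\<Sum>j<D. \<Sum>i<D. vinner D (f j) v * (f j i * v i))"
    by (rule sum.swap)
  also have "\<dots> = (\<Sum>j<D. (vinner D (f j) v)\<^sup>2)"
    unfolding vinner_def power2_eq_square by (simp add: sum_distrib_left)
  finally show ?thesis .
qed

definition lin_closed :: "(nat \<Rightarrow> real) set \<Rightarrow> bool" where
  "lin_closed V \<longleftrightarrow> (\<lambda>_. 0) \<in> V \<and> (\<forall>v\<in>V. \<forall>w\<in>V. (\<lambda>i. v i + w i) \<in> V) \<and>
     (\<forall>a::real. \<forall>v\<in>V. (\<lambda>i. a * v i) \<in> V)"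

lemma lin_closed_subspace: "lin_subspace D S \<Longrightarrow> lin_closed S"
  unfolding lin_closed_def lin_subspace_def by auto

lemma lin_closedD:
  assumes "lin_closed V"
  shows lin_closed_zero: "(\<lambda>_. 0) \<in> V"
    and lin_closed_add: "v \<in> V \<Longrightarrow> w \<in> V \<Longrightarrow> (\<lambda>i. v i + w i) \<in> V"
    and lin_closed_scale: "v \<in> V \<Longrightarrow> (\<lambda>i. a * v i) \<in> V"
  using assms unfolding lin_closed_def by blast+

lemma lin_closed_sum:
  assumes V: "lin_closed V" and "finite A" and "\<And>a. a \<in> A \<Longrightarrow> g a \<in> V"
  shows "(\<lambda>i. \<Sum>a\<in>A. c a * g a i) \<in> V"
  using assms(2,3)
proof (induction A rule: finite_induct)
  case empty
  then show ?case using lin_closed_zero[OF V] by simp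
next
  case (insert x F)
  then have "(\<lambda>i. c x * g x i + (\<Sum>a\<in>F. c a * g a i)) \<in> V"
    by (intro lin_closed_add[OF V] lin_closed_scale[OF V]) auto
  then show ?case using insert by simp
qed

text \<open>Membership in the span only constrains the coordinates below \<open>D\<close>.\<close>
definition list_span :: "nat \<Rightarrow> (nat \<Rightarrow> real) list \<Rightarrow> (nat \<Rightarrow> real) set" where
  "list_span D L = {w. \<exists>c. \<forall>i<D. w i = (\<Sum>a<length L. c a * (L ! a) i)}"

lemma lin_closed_list_span: "lin_closed (list_span D L)"
  unfolding lin_closed_def list_span_def
proof (intro conjI ballI allI; clarsimp?)
  show "\<exists>c. \<forall>i<D. (\<Sum>a<length L. c a * (L ! a) i) = 0"
    by (rule exI[of _ "\<lambda>_. 0"]) simp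
next
  fix c1 c2
  show "\<exists>c. \<forall>i<D. (\<Sum>a<length L. c1 a * (L ! a) i) + (\<Sum>a<length L. c2 a * (L ! a) i) =
                   (\<Sum>a<length L. c a * (L ! a) i)"
    by (rule exI[of _ "\<lambda>a. c1 a + c2 a"]) (simp add: distrib_right sum.distrib)
next
  fix a c1
  show "\<exists>c. \<forall>i<D. a * (\<Sum>a<length L. c1 a * (L ! a) i) = (\<Sum>a<length L. c a * (L ! a) i)"
    by (rule exI[of _ "\<lambda>b. a * c1 b"]) (simp add: sum_distrib_left mult.assoc)
qed

lemma list_span_append: "w \<in> list_span D L \<Longrightarrow> w \<in> list_span D (L @ M)"
proof -
  assume "w \<in> list_span D L"
  then obtain c where c: "\<forall>i<D. w i = (\<Sum>a<length L. c a * (L ! a) i)"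
    unfolding list_span_def by auto
  define c' where "c' a = (if a < length L then c a else 0)" for a
  have "(\<Sum>a<length (L @ M). c' a * ((L @ M) ! a) i) = (\<Sum>a<length L. c a * (L ! a) i)" for i
    by (rule sum.mono_neutral_cong_right) (auto simp: c'_def nth_append)
  then show ?thesis using c unfolding list_span_def by (intro CollectI exI[of _ c']) simp
qed

lemma coeffs_list_span:
  assumes "orthonormal D (length L) ((!) L)" "w \<in> list_span D L" "i < D"
  shows "w i = (\<Sum>a<length L. vinner D (L ! a) w * (L ! a) i)"
proof -
  obtain c where c: "\<forall>i<D. w i = (\<Sum>a<length L. c a * (L ! a) i)"
    using assms(2) unfolding list_span_def by auto
  have "vinner D (L ! b) w = c b" if "b < length L" for b
  proof -
    have "vinner D (L ! b) w = vinner D (L ! b) (\<lambda>i. \<Sum>a<length L. c a * (L ! a) i)"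
      using c by (intro vinner_cong_right) auto
    also have "\<dots> = c b"
      using vinner_orthonormal_comb[OF assms(1) that, of "{..<length L}" c] that by simp
    finally show ?thesis .
  qed
  then show ?thesis using c assms(3) by simp
qed

definition gs_residual :: "nat \<Rightarrow> (nat \<Rightarrow> real) list \<Rightarrow> (nat \<Rightarrow> real) \<Rightarrow> (nat \<Rightarrow> real)" where
  "gs_residual D L w = (\<lambda>i. w i - (\<Sum>a<length L. vinner D (L ! a) w * (L ! a) i))"

definition gs_step :: "nat \<Rightarrow> (nat \<Rightarrow> real) list \<Rightarrow> (nat \<Rightarrow> real) \<Rightarrow> (nat \<Rightarrow> real) list" where
  "gs_step D L w =
     (let r = gs_residual D L w in
      if vinner D r r = 0 then L else L @ [(\<lambda>i. r i / sqrt (vinner D r r))])"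

definition gram_schmidt :: "nat \<Rightarrow> (nat \<Rightarrow> real) list \<Rightarrow> (nat \<Rightarrow> real) list \<Rightarrow> (nat \<Rightarrow> real) list" where
  "gram_schmidt D L ws = foldl (gs_step D) L ws"

lemma vinner_gs_residual:
  assumes "orthonormal D (length L) ((!) L)" "b < length L"
  shows "vinner D (L ! b) (gs_residual D L w) = 0"
  using vinner_orthonormal_comb[OF assms, of "{..<length L}" "\<lambda>a. vinner D (L ! a) w"] assms(2)
  by (simp add: gs_residual_def vinner_diff_right vinner_comm)

lemma gs_residual_eq_0_imp_list_span:
  assumes "vinner D (gs_residual D L w) (gs_residual D L w) = 0"
  shows "w \<in> list_span D L"
  using vinner_self_eq_0[OF assms] unfolding gs_residual_def list_span_def by auto

lemma gs_step_cases:
  obtains "gs_step D L w = L" "w \<in> list_span D L"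
  | r where "r = gs_residual D L w" "vinner D r r > 0"
      "gs_step D L w = L @ [(\<lambda>i. r i / sqrt (vinner D r r))]"
  using vinner_self_nonneg[of D "gs_residual D L w"] gs_residual_eq_0_imp_list_span[of D L w]
  unfolding gs_step_def Let_def by (cases "vinner D (gs_residual D L w) (gs_residual D L w) = 0") auto

lemma orthonormal_snoc:
  assumes L: "orthonormal D (length L) ((!) L)" and "vinner D q q = 1"
    and "\<And>b. b < length L \<Longrightarrow> vinner D (L ! b) q = 0"
  shows "orthonormal D (length (L @ [q])) ((!) (L @ [q]))"
  unfolding orthonormal_def
proof (intro allI impI)
  fix a b assume "a < length (L @ [q])" "b < length (L @ [q])"
  then consider "a < length L" "b < length L" | "a < length L" "b = length L"
    | "a = length L" "b < length L" | "a = length L" "b = length L"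
    by fastforce
  then show "vinner D ((L @ [q]) ! a) ((L @ [q]) ! b) = (if a = b then 1 else 0)"
  proof cases
    case 1
    then show ?thesis using L unfolding orthonormal_def by (simp add: nth_append)
  next
    case 2
    then show ?thesis using assms(3) by (simp add: nth_append)
  next
    case 3
    then show ?thesis using assms(3) by (simp add: nth_append vinner_comm)
  next
    case 4
    then show ?thesis using assms(2) by (simp add: nth_append)
  qed
qed

lemma orthonormal_gs_step:
  assumes L: "orthonormal D (length L) ((!) L)"
  shows "orthonormal D (length (gs_step D L w)) ((!) (gs_step D L w))"
proof (cases rule: gs_step_cases[of D L w])
  case (2 r)
  define s where "s = sqrt (vinner D r r)"
  have s: "s > 0" "s * s = vinner D r r" using 2 unfolding s_def by simp_all
  have "vinner D (\<lambda>i. r i / s) (\<lambda>i. r i / s) = vinner D r r / (s * s)"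
    unfolding vinner_def by (simp add: sum_divide_distrib)
  then have "vinner D (\<lambda>i. r i / s) (\<lambda>i. r i / s) = 1" using s 2(2) by simp
  moreover have "vinner D (L ! b) (\<lambda>i. r i / s) = 0" if "b < length L" for b
    using vinner_gs_residual[OF L that, of w] 2(1)
    unfolding vinner_def by (simp add: sum_divide_distrib[symmetric] mult.assoc)
  ultimately show ?thesis
    unfolding 2(3) s_def[symmetric] by (rule orthonormal_snoc[OF L])
qed (use assms in simp)

lemma gs_step_list_span: "w \<in> list_span D (gs_step D L w)"
proof (cases rule: gs_step_cases[of D L w])
  case (2 r)
  define s where "s = sqrt (vinner D r r)"
  have s: "s > 0" using 2 unfolding s_def by simp
  define c where "c a = (if a < length L then vinner D (L ! a) w else s)" for a
  have "w i = (\<Sum>a<Suc (length L). c a * ((L @ [(\<lambda>i. r i / s)]) ! a) i)" for i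
    using s 2(1) by (simp add: c_def nth_append gs_residual_def)
  then show ?thesis unfolding 2(3) list_span_def s_def[symmetric] by auto
qed simp

lemma gs_step_subset:
  assumes V: "lin_closed V" and "set L \<subseteq> V" "w \<in> V"
  shows "set (gs_step D L w) \<subseteq> V"
proof (cases rule: gs_step_cases[of D L w])
  case (2 r)
  have "(\<lambda>i. \<Sum>a<length L. (- vinner D (L ! a) w) * (L ! a) i) \<in> V"
    by (rule lin_closed_sum[OF V]) (use assms in auto)
  then have "(\<lambda>i. w i + (\<Sum>a<length L. (- vinner D (L ! a) w) * (L ! a) i)) \<in> V"
    using lin_closed_add[OF V \<open>w \<in> V\<close>] by blast
  then have "r \<in> V" unfolding 2(1) gs_residual_def by (simp add: sum_negf)
  then have "(\<lambda>i. (1 / sqrt (vinner D r r)) * r i) \<in> V"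
    by (rule lin_closed_scale[OF V])
  then show ?thesis unfolding 2(3) using assms by simp
qed (use assms in simp)

lemma gs_step_length: "w \<notin> list_span D L \<Longrightarrow> length (gs_step D L w) = Suc (length L)"
  by (cases rule: gs_step_cases[of D L w]) auto

lemma gram_schmidt_Nil [simp]: "gram_schmidt D L [] = L"
  and gram_schmidt_Cons [simp]: "gram_schmidt D L (w # ws) = gram_schmidt D (gs_step D L w) ws"
  and gram_schmidt_snoc: "gram_schmidt D L (ws @ [w]) = gs_step D (gram_schmidt D L ws) w"
  unfolding gram_schmidt_def by simp_all

lemma orthonormal_gram_schmidt:
  "orthonormal D (length L) ((!) L) \<Longrightarrow>
   orthonormal D (length (gram_schmidt D L ws)) ((!) (gram_schmidt D L ws))"
proof (induction ws arbitrary: L)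
  case (Cons w ws)
  then show ?case using orthonormal_gs_step by simp
qed simp

lemma gram_schmidt_prefix: "\<exists>ext. gram_schmidt D L ws = L @ ext"
proof (induction ws arbitrary: L)
  case (Cons w ws)
  obtain e where "gs_step D L w = L @ e"
    by (cases rule: gs_step_cases[of D L w]) auto
  with Cons[of "gs_step D L w"] show ?case by auto
qed simp

lemma gram_schmidt_list_span: "w \<in> set ws \<Longrightarrow> w \<in> list_span D (gram_schmidt D L ws)"
proof (induction ws arbitrary: L)
  case (Cons v ws)
  show ?case
  proof (cases "w = v")
    case True
    obtain e where "gram_schmidt D (gs_step D L v) ws = gs_step D L v @ e"
      using gram_schmidt_prefix by blast
    then show ?thesis using True gs_step_list_span[of v D L] list_span_append by simp
  qed (use Cons in simp)
qed simp

lemma gram_schmidt_subset: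
  "lin_closed V \<Longrightarrow> set L \<subseteq> V \<Longrightarrow> set ws \<subseteq> V \<Longrightarrow> set (gram_schmidt D L ws) \<subseteq> V"
proof (induction ws arbitrary: L)
  case (Cons w ws)
  then show ?case using gs_step_subset[of V L w D] by simp
qed simp

definition prefix_span :: "(nat \<Rightarrow> nat \<Rightarrow> real) \<Rightarrow> nat \<Rightarrow> (nat \<Rightarrow> real) set" where
  "prefix_span u j = {v. \<exists>\<beta>. v = (\<lambda>i. \<Sum>l<j. \<beta> l * u l i)}"

lemma lin_closed_prefix_span: "lin_closed (prefix_span u j)"
  unfolding lin_closed_def prefix_span_def
proof (intro conjI ballI allI; clarsimp?)
  show "\<exists>\<beta>. (\<lambda>_. 0) = (\<lambda>i. \<Sum>l<j. \<beta> l * u l i)"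
    by (rule exI[of _ "\<lambda>_. 0"]) simp
next
  fix c1 c2
  show "\<exists>\<beta>. (\<lambda>i. (\<Sum>l<j. c1 l * u l i) + (\<Sum>l<j. c2 l * u l i)) = (\<lambda>i. \<Sum>l<j. \<beta> l * u l i)"
    by (rule exI[of _ "\<lambda>a. c1 a + c2 a"]) (simp add: distrib_right sum.distrib)
next
  fix a c1
  show "\<exists>\<beta>. (\<lambda>i. a * (\<Sum>l<j. c1 l * u l i)) = (\<lambda>i. \<Sum>l<j. \<beta> l * u l i)"
    by (rule exI[of _ "\<lambda>b. a * c1 b"]) (simp add: sum_distrib_left mult.assoc)
qed

lemma prefix_span_mono: "prefix_span u j \<subseteq> prefix_span u (Suc j)"
proof
  fix v assume "v \<in> prefix_span u j"
  then obtain \<beta> where "v = (\<lambda>i. \<Sum>l<j. \<beta> l * u l i)" unfolding prefix_span_def by auto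
  then have "v = (\<lambda>i. \<Sum>l<Suc j. (if l < j then \<beta> l else 0) * u l i)" by simp
  then show "v \<in> prefix_span u (Suc j)" unfolding prefix_span_def by (intro CollectI exI)
qed

lemma prefix_span_self: "u j \<in> prefix_span u (Suc j)"
proof -
  have "u j = (\<lambda>i. \<Sum>l<Suc j. (if l = j then 1 else 0) * u l i)"
    by (simp add: if_distrib cong: if_cong)
  then show ?thesis unfolding prefix_span_def by (intro CollectI exI)
qed

text \<open>The coordinates at or above \<open>D\<close> must vanish: \<open>list_span\<close> ignores them, whereas the
  independence hypothesis of \<open>subspace_of_dim\<close> quantifies over all coordinates.\<close>
lemma independent_not_in_list_span:
  assumes zero: "\<And>l i. l < d \<Longrightarrow> D \<le> i \<Longrightarrow> u l i = 0"
    and indep: "\<And>a. \<forall>i. (\<Sum>l<d. a l * u l i) = 0 \<Longrightarrow> \<forall>l<d. a l = 0"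
    and "j < d" and L: "set L \<subseteq> prefix_span u j"
  shows "u j \<notin> list_span D L"
proof
  assume "u j \<in> list_span D L"
  then obtain c where c: "\<forall>i<D. u j i = (\<Sum>a<length L. c a * (L ! a) i)"
    unfolding list_span_def by auto
  have "(\<lambda>i. \<Sum>a<length L. c a * (L ! a) i) \<in> prefix_span u j"
    by (rule lin_closed_sum[OF lin_closed_prefix_span]) (use L in auto)
  then obtain \<beta> where \<beta>: "(\<lambda>i. \<Sum>a<length L. c a * (L ! a) i) = (\<lambda>i. \<Sum>l<j. \<beta> l * u l i)"
    unfolding prefix_span_def by auto
  have u_j: "u j i = (\<Sum>l<j. \<beta> l * u l i)" for i
  proof (cases "i < D")
    case True
    then show ?thesis using c fun_cong[OF \<beta>, of i] by simp
  next
    case False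
    then show ?thesis using zero \<open>j < d\<close> by simp
  qed
  define \<gamma> where "\<gamma> l = (if l < j then \<beta> l else if l = j then -1 else 0)" for l
  have "(\<Sum>l<d. \<gamma> l * u l i) = 0" for i
  proof -
    have "(\<Sum>l<d. \<gamma> l * u l i) = (\<Sum>l<Suc j. \<gamma> l * u l i)"
      by (rule sum.mono_neutral_right) (use \<open>j < d\<close> in \<open>auto simp: \<gamma>_def\<close>)
    also have "\<dots> = (\<Sum>l<j. \<beta> l * u l i) - u j i"
      by (simp add: \<gamma>_def)
    finally show ?thesis using u_j[of i] by simp
  qed
  then have "\<gamma> j = 0" using indep \<open>j < d\<close> by blast
  then show False unfolding \<gamma>_def by simp
qed

lemma length_gram_schmidt_independent:
  assumes zero: "\<And>l i. l < d \<Longrightarrow> D \<le> i \<Longrightarrow> u l i = 0"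
    and indep: "\<And>a. \<forall>i. (\<Sum>l<d. a l * u l i) = 0 \<Longrightarrow> \<forall>l<d. a l = 0"
    and "j \<le> d"
  shows "length (gram_schmidt D [] (map u [0..<j])) = j"
proof -
  have "length (gram_schmidt D [] (map u [0..<j])) = j \<and>
        set (gram_schmidt D [] (map u [0..<j])) \<subseteq> prefix_span u j"
    using \<open>j \<le> d\<close>
  proof (induction j)
    case (Suc j)
    define L where "L = gram_schmidt D [] (map u [0..<j])"
    have IH: "length L = j" "set L \<subseteq> prefix_span u j" and "j < d"
      using Suc unfolding L_def by auto
    have "u j \<notin> list_span D L"
      by (rule independent_not_in_list_span[OF zero indep \<open>j < d\<close> IH(2)])
    then have "length (gs_step D L (u j)) = Suc j" using IH(1) by (simp add: gs_step_length)
    moreover have "set (gs_step D L (u j)) \<subseteq> prefix_span u (Suc j)"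
      by (rule gs_step_subset[OF lin_closed_prefix_span])
        (use IH(2) prefix_span_mono prefix_span_self in auto)
    ultimately show ?case by (simp add: L_def gram_schmidt_snoc)
  qed simp
  then show ?thesis ..
qed

definition unit_vec :: "nat \<Rightarrow> nat \<Rightarrow> real" where
  "unit_vec i = (\<lambda>k. if k = i then 1 else 0)"

lemma gram_schmidt_unit_vecs:
  assumes P: "orthonormal D (length P) ((!) P)"
  defines "F \<equiv> gram_schmidt D P (map unit_vec [0..<D])"
  shows "orthonormal D (length F) ((!) F)" and "\<exists>ext. F = P @ ext" and "length F = D"
    and "\<And>z i. i < D \<Longrightarrow> z i = (\<Sum>a<length F. vinner D (F ! a) z * (F ! a) i)"
proof -
  show F: "orthonormal D (length F) ((!) F)"
    unfolding F_def by (rule orthonormal_gram_schmidt[OF P])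
  show "\<exists>ext. F = P @ ext" unfolding F_def by (rule gram_schmidt_prefix)
  have "z \<in> list_span D F" for z
  proof -
    have "(\<lambda>k. \<Sum>i<D. z i * unit_vec i k) \<in> list_span D F"
      by (rule lin_closed_sum[OF lin_closed_list_span])
        (auto simp: F_def intro: gram_schmidt_list_span)
    moreover have "z k = (\<Sum>i<D. z i * unit_vec i k)" if "k < D" for k
      using that unfolding unit_vec_def by (simp add: if_distrib cong: if_cong)
    ultimately show ?thesis unfolding list_span_def by auto
  qed
  then show complete: "z i = (\<Sum>a<length F. vinner D (F ! a) z * (F ! a) i)" if "i < D" for z i
    using coeffs_list_span[OF F _ that] by blast
  have "(\<Sum>a<length F. (F ! a) i * (F ! a) i) = 1" if "i < D" for i
    using complete[OF that, of "unit_vec i"] that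
    by (simp add: vinner_def unit_vec_def if_distrib cong: if_cong)
  then have "real D = (\<Sum>i<D. \<Sum>a<length F. (F ! a) i * (F ! a) i)"
    by simp
  also have "\<dots> = (\<Sum>a<length F. vinner D (F ! a) (F ! a))"
    unfolding vinner_def by (rule sum.swap)
  also have "\<dots> = real (length F)"
    using F unfolding orthonormal_def by simp
  finally show "length F = D" by simp
qed

definition adapted_basis :: "nat \<Rightarrow> nat \<Rightarrow> (nat \<Rightarrow> real) set \<Rightarrow> (nat \<Rightarrow> nat \<Rightarrow> real) \<Rightarrow> bool"
  where "adapted_basis D d S f \<longleftrightarrow> d \<le> D \<and> orthonormal D D f \<and> (\<forall>j<d. f j \<in> S) \<and>
    (\<forall>w\<in>S. \<forall>j. d \<le> j \<longrightarrow> j < D \<longrightarrow> vinner D (f j) w = 0) \<and>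
    (\<forall>z. \<forall>i<D. z i = (\<Sum>j<D. vinner D (f j) z * f j i))"

lemma adapted_basis_exists:
  assumes "subspace_of_dim D d S"
  shows "\<exists>f. adapted_basis D d S f"
proof -
  have LS: "lin_subspace D S" using assms unfolding subspace_of_dim_def by simp
  obtain u where uS: "\<And>j. j < d \<Longrightarrow> u j \<in> S"
    and indep: "\<And>a. \<forall>i. (\<Sum>l<d. a l * u l i) = 0 \<Longrightarrow> \<forall>l<d. a l = 0"
    and spans: "\<And>v. v \<in> S \<Longrightarrow> \<exists>a. v = (\<lambda>i. \<Sum>l<d. a l * u l i)"
    using assms unfolding subspace_of_dim_def by blast
  have zero: "u l i = 0" if "l < d" "D \<le> i" for l i
    using uS[OF that(1)] LS that(2) unfolding lin_subspace_def vecs_def by auto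
  define P where "P = gram_schmidt D [] (map u [0..<d])"
  have P_len: "length P = d"
    unfolding P_def by (rule length_gram_schmidt_independent[OF zero indep]) auto
  have P_S: "set P \<subseteq> S"
    unfolding P_def by (rule gram_schmidt_subset[OF lin_closed_subspace[OF LS]]) (use uS in auto)
  have P_on: "orthonormal D (length P) ((!) P)"
    unfolding P_def by (rule orthonormal_gram_schmidt) (simp add: orthonormal_def)
  have S_span: "w \<in> list_span D P" if w: "w \<in> S" for w
  proof -
    obtain a where "w = (\<lambda>i. \<Sum>l<d. a l * u l i)" using spans[OF w] by blast
    also have "\<dots> \<in> list_span D P"
      by (rule lin_closed_sum[OF lin_closed_list_span])
        (auto simp: P_def intro: gram_schmidt_list_span)
    finally show ?thesis .
  qed
  define F where "F = gram_schmidt D P (map unit_vec [0..<D])"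
  obtain ext where F_ext: "F = P @ ext"
    using gram_schmidt_unit_vecs(2)[OF P_on] unfolding F_def by blast
  have F_on: "orthonormal D D ((!) F)" and F_len: "length F = D"
    using gram_schmidt_unit_vecs(1,3)[OF P_on] unfolding F_def by auto
  have P_F: "P ! b = F ! b" if "b < d" for b
    using that P_len unfolding F_ext by (simp add: nth_append)
  have perp: "vinner D (F ! j) w = 0" if w: "w \<in> S" and j: "d \<le> j" "j < D" for w j
  proof -
    obtain c where c: "\<forall>i<D. w i = (\<Sum>b<d. c b * (P ! b) i)"
      using S_span[OF w] P_len unfolding list_span_def by auto
    have "vinner D (F ! j) w = vinner D (F ! j) (\<lambda>i. \<Sum>b<d. c b * (F ! b) i)"
      using c P_F by (intro vinner_cong_right) simp
    also have "\<dots> = 0"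
      using vinner_orthonormal_comb[OF F_on \<open>j < D\<close>, of "{..<d}" c] j by simp
    finally show ?thesis .
  qed
  have "adapted_basis D d S ((!) F)"
    unfolding adapted_basis_def
    using F_on F_len P_len F_ext P_S perp gram_schmidt_unit_vecs(4)[OF P_on]
    by (auto simp: F_def[symmetric] nth_append)
  then show ?thesis by blast
qed

lemma sum_lessThan_split: "(d::nat) \<le> D \<Longrightarrow> (\<Sum>j<D. g j) = (\<Sum>j<d. g j) + (\<Sum>j\<in>{d..<D}. g j)"
  using sum.atLeastLessThan_concat[of 0 d D g] by (simp add: atLeast0LessThan)

lemma sdist_adapted_basis:
  assumes f: "adapted_basis D d S f" and S: "lin_subspace D S"
  shows "sdist D z S = sqrt (\<Sum>j\<in>{d..<D}. (vinner D (f j) z)\<^sup>2)"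
proof -
  have complete: "\<And>z i. i < D \<Longrightarrow> z i = (\<Sum>j<D. vinner D (f j) z * f j i)"
    and on: "orthonormal D D f" and fS: "\<And>j. j < d \<Longrightarrow> f j \<in> S"
    and perp: "\<And>w j. w \<in> S \<Longrightarrow> d \<le> j \<Longrightarrow> j < D \<Longrightarrow> vinner D (f j) w = 0"
    and "d \<le> D"
    using f unfolding adapted_basis_def by auto
  have enorm_eq: "enorm D (\<lambda>i. z i - w i) = sqrt (\<Sum>j<D. (vinner D (f j) z - vinner D (f j) w)\<^sup>2)"
    for w
    unfolding enorm_def using parseval[OF complete, of "\<lambda>i. z i - w i"]
    by (simp add: vinner_diff_right)
  define m where "m = sqrt (\<Sum>j\<in>{d..<D}. (vinner D (f j) z)\<^sup>2)"
  define p where "p = (\<lambda>i. \<Sum>j<d. vinner D (f j) z * f j i)"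
  have "p \<in> S"
    unfolding p_def by (rule lin_closed_sum[OF lin_closed_subspace[OF S]]) (use fS in auto)
  moreover have "enorm D (\<lambda>i. z i - p i) = m"
  proof -
    have "vinner D (f j) p = (if j < d then vinner D (f j) z else 0)" if "j < D" for j
      using vinner_orthonormal_comb[OF on that, of "{..<d}"] \<open>d \<le> D\<close> unfolding p_def by simp
    then have "(\<Sum>j<D. (vinner D (f j) z - vinner D (f j) p)\<^sup>2) =
               (\<Sum>j<D. if d \<le> j then (vinner D (f j) z)\<^sup>2 else 0)"
      by (intro sum.cong) auto
    also have "\<dots> = (\<Sum>j\<in>{d..<D}. (vinner D (f j) z)\<^sup>2)"
      by (rule sum.mono_neutral_cong_right) auto
    finally show ?thesis unfolding enorm_eq m_def by simp
  qed
  moreover have "m \<le> enorm D (\<lambda>i. z i - w i)" if w: "w \<in> S" for w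
  proof -
    have "(\<Sum>j\<in>{d..<D}. (vinner D (f j) z)\<^sup>2) =
          (\<Sum>j\<in>{d..<D}. (vinner D (f j) z - vinner D (f j) w)\<^sup>2)"
      using perp[OF w] by (intro sum.cong) auto
    also have "\<dots> \<le> (\<Sum>j<D. (vinner D (f j) z - vinner D (f j) w)\<^sup>2)"
      unfolding sum_lessThan_split[OF \<open>d \<le> D\<close>] by (simp add: sum_nonneg)
    finally show ?thesis unfolding enorm_eq m_def by simp
  qed
  ultimately have "Inf ((\<lambda>w. enorm D (\<lambda>i. z i - w i)) ` S) = m"
    by (intro cInf_eq_minimum) auto
  then show ?thesis unfolding sdist_def m_def .
qed

lemma sdist_sq_adapted_basis:
  assumes "adapted_basis D d S f" "lin_subspace D S"
  shows "(sdist D z S)\<^sup>2 = (\<Sum>j\<in>{d..<D}. (vinner D (f j) z)\<^sup>2)"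
  unfolding sdist_adapted_basis[OF assms] by (simp add: sum_nonneg)

lemma sdist_nonneg_adapted_basis:
  assumes "adapted_basis D d S f" "lin_subspace D S"
  shows "sdist D z S \<ge> 0"
  unfolding sdist_adapted_basis[OF assms] by (simp add: sum_nonneg)

lemma sdist_eq_0_adapted_basis:
  assumes "adapted_basis D d S f" "lin_subspace D S" "x \<in> S"
  shows "sdist D x S = 0"
  using assms unfolding sdist_adapted_basis[OF assms(1,2)] adapted_basis_def by simp

lemma borel_measurable_sdist_translate:
  assumes "adapted_basis D d S f" "lin_subspace D S"
  shows "(\<lambda>n. sdist D (\<lambda>i. x i + n i) S) \<in> borel_measurable (gauss_noise D \<sigma>)"
  unfolding sdist_adapted_basis[OF assms] vinner_def gauss_noise_def by measurable

section \<open>Tail bounds for squared distances of Gaussian vectors\<close>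

text \<open>Rotation invariance of the Gaussian is avoided: each squared projection
  \<open>\<langle>u\<^sub>j, n\<rangle>\<^sup>2\<close> in the exponent is linearised by an auxiliary standard Gaussian \<open>g\<^sub>j\<close>,
  after which Fubini reduces everything to one-dimensional Gaussian integrals.\<close>
lemma nn_integral_exp_sum_sq_projections_linearised:
  fixes \<Phi> :: "(nat \<Rightarrow> real) \<Rightarrow> real" and k :: nat
  assumes \<sigma>: "\<sigma> > 0" and t: "t \<ge> 0"
    and \<Phi>[measurable]: "\<Phi> \<in> borel_measurable (PiM {..<D} (\<lambda>_. normal_measure \<sigma>))"
  defines "G \<equiv> PiM {..<D} (\<lambda>_. normal_measure \<sigma>)" and "H \<equiv> PiM {..<k} (\<lambda>_. normal_measure 1)"
  shows "(\<integral>\<^sup>+n. ennreal (exp (\<Phi> n + t * (\<Sum>j<k. (\<alpha> j + vinner D (u j) n)\<^sup>2))) \<partial>G) =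
    (\<integral>\<^sup>+g. ennreal (exp (\<Sum>j<k. sqrt (2 * t) * \<alpha> j * g j)) *
       (\<integral>\<^sup>+n. ennreal (exp (\<Phi> n + (\<Sum>i<D. sqrt (2 * t) * (\<Sum>j<k. g j * u j i) * n i))) \<partial>G) \<partial>H)"
proof -
  define r where "r = sqrt (2 * t)"
  interpret G: prob_space G unfolding G_def by (rule prob_space_PiM_normal_measure[OF \<sigma>])
  interpret H: prob_space H unfolding H_def by (rule prob_space_PiM_normal_measure) simp
  interpret GH: pair_sigma_finite G H
    by (simp add: pair_sigma_finite_def G.sigma_finite_measure_axioms H.sigma_finite_measure_axioms)
  define F where "F n g = ennreal (exp (\<Sum>j<k. r * \<alpha> j * g j)) *
    ennreal (exp (\<Phi> n + (\<Sum>i<D. r * (\<Sum>j<k. g j * u j i) * n i)))" for n g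
  have [measurable]: "(\<lambda>(n, g). F n g) \<in> borel_measurable (G \<Otimes>\<^sub>M H)"
    unfolding F_def G_def H_def by measurable
  have linearise: "exp (\<Phi> n) * exp (\<Sum>j<k. r * (\<alpha> j + vinner D (u j) n) * g j) =
      exp (\<Sum>j<k. r * \<alpha> j * g j) * exp (\<Phi> n + (\<Sum>i<D. r * (\<Sum>j<k. g j * u j i) * n i))" for n g
  proof -
    have "(\<Sum>j<k. r * (\<alpha> j + vinner D (u j) n) * g j) =
          (\<Sum>j<k. r * \<alpha> j * g j) + (\<Sum>i<D. r * (\<Sum>j<k. g j * u j i) * n i)"
      by (simp add: vinner_def algebra_simps sum.distrib sum_distrib_left sum_distrib_right
          sum.swap[of _ "{..<D}"])
    then show ?thesis by (simp add: exp_add[symmetric])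
  qed
  have "(\<integral>\<^sup>+n. ennreal (exp (\<Phi> n + t * (\<Sum>j<k. (\<alpha> j + vinner D (u j) n)\<^sup>2))) \<partial>G) =
        (\<integral>\<^sup>+n. (\<integral>\<^sup>+g. F n g \<partial>H) \<partial>G)"
  proof (intro nn_integral_cong)
    fix n
    have "ennreal (exp (\<Phi> n + t * (\<Sum>j<k. (\<alpha> j + vinner D (u j) n)\<^sup>2))) =
          ennreal (exp (\<Phi> n)) * (\<integral>\<^sup>+g. ennreal (exp (\<Sum>j<k. r * (\<alpha> j + vinner D (u j) n) * g j)) \<partial>H)"
      unfolding exp_add ennreal_mult'[OF exp_ge_zero] H_def r_def
      by (subst exp_sum_sq_eq_nn_integral_normal[OF t]) (simp add: mult_ac)
    also have "\<dots> = (\<integral>\<^sup>+g. F n g \<partial>H)"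
      unfolding F_def by (subst nn_integral_cmult[symmetric])
        (simp_all add: H_def linearise flip: ennreal_mult')
    finally show "ennreal (exp (\<Phi> n + t * (\<Sum>j<k. (\<alpha> j + vinner D (u j) n)\<^sup>2))) = (\<integral>\<^sup>+g. F n g \<partial>H)" .
  qed
  also have "\<dots> = (\<integral>\<^sup>+g. (\<integral>\<^sup>+n. F n g \<partial>G) \<partial>H)"
    by (rule GH.Fubini'[symmetric]) measurable
  also have "\<dots> = (\<integral>\<^sup>+g. ennreal (exp (\<Sum>j<k. r * \<alpha> j * g j)) *
       (\<integral>\<^sup>+n. ennreal (exp (\<Phi> n + (\<Sum>i<D. r * (\<Sum>j<k. g j * u j i) * n i))) \<partial>G) \<partial>H)"
    unfolding F_def by (intro nn_integral_cong nn_integral_cmult) (simp add: G_def)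
  finally show ?thesis unfolding r_def .
qed

lemma nn_integral_exp_sum_sq_projections:
  fixes \<sigma> t :: real and \<alpha> :: "nat \<Rightarrow> real"
  assumes \<sigma>: "\<sigma> > 0" and t: "t \<ge> 0" "2 * t * \<sigma>\<^sup>2 < 1" and u: "orthonormal D k u"
  shows "(\<integral>\<^sup>+n. ennreal (exp (t * (\<Sum>j<k. (\<alpha> j + vinner D (u j) n)\<^sup>2)))
            \<partial>PiM {..<D} (\<lambda>_. normal_measure \<sigma>)) =
    ennreal ((1 / sqrt (1 - 2 * t * \<sigma>\<^sup>2)) ^ k * exp (t * (\<Sum>j<k. (\<alpha> j)\<^sup>2) / (1 - 2 * t * \<sigma>\<^sup>2)))"
proof -
  define r where "r = sqrt (2 * t)"
  have r2: "r\<^sup>2 = 2 * t" using t unfolding r_def by simp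
  have q: "1 - 2 * t * \<sigma>\<^sup>2 > 0" using t by simp
  have inner: "(\<integral>\<^sup>+n. ennreal (exp (\<Sum>i<D. r * (\<Sum>j<k. g j * u j i) * n i))
                   \<partial>PiM {..<D} (\<lambda>_. normal_measure \<sigma>)) =
               ennreal (exp (\<Sum>j<k. t * \<sigma>\<^sup>2 * (g j)\<^sup>2))" for g
  proof -
    have "(\<Sum>i<D. (r * (\<Sum>j<k. g j * u j i))\<^sup>2) = r\<^sup>2 * (\<Sum>j<k. (g j)\<^sup>2)"
      by (simp add: power_mult_distrib sum_distrib_left[symmetric] sum_sq_orthonormal_comb[OF u])
    then have "(\<Sum>i<D. (r * (\<Sum>j<k. g j * u j i))\<^sup>2 * \<sigma>\<^sup>2 / (2 * (1 - 2 * 0 * \<sigma>\<^sup>2))) =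
               (\<Sum>j<k. t * \<sigma>\<^sup>2 * (g j)\<^sup>2)"
      by (simp add: r2 sum_divide_distrib[symmetric] sum_distrib_right[symmetric]
          sum_distrib_left[symmetric])
    then show ?thesis
      using nn_integral_PiM_normal_exp_quadratic[OF \<sigma>, where c=0 and m=D
          and b="\<lambda>i. r * (\<Sum>j<k. g j * u j i)"]
      by simp
  qed
  have "(\<integral>\<^sup>+n. ennreal (exp (t * (\<Sum>j<k. (\<alpha> j + vinner D (u j) n)\<^sup>2)))
            \<partial>PiM {..<D} (\<lambda>_. normal_measure \<sigma>)) =
        (\<integral>\<^sup>+g. ennreal (exp (\<Sum>j<k. r * \<alpha> j * g j)) *
           (\<integral>\<^sup>+n. ennreal (exp (\<Sum>i<D. r * (\<Sum>j<k. g j * u j i) * n i))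
              \<partial>PiM {..<D} (\<lambda>_. normal_measure \<sigma>)) \<partial>PiM {..<k} (\<lambda>_. normal_measure 1))"
    using nn_integral_exp_sum_sq_projections_linearised[OF \<sigma> t(1), where \<Phi>="\<lambda>_. 0" and k=k
        and \<alpha>=\<alpha> and u=u]
    by (simp add: r_def)
  also have "\<dots> = (\<integral>\<^sup>+g. ennreal (exp (\<Sum>j<k. r * \<alpha> j * g j + t * \<sigma>\<^sup>2 * (g j)\<^sup>2))
                     \<partial>PiM {..<k} (\<lambda>_. normal_measure 1))"
    unfolding inner by (simp add: sum.distrib exp_add flip: ennreal_mult')
  also have "\<dots> = ennreal ((1 / sqrt (1 - 2 * t * \<sigma>\<^sup>2)) ^ k *
                   exp (\<Sum>j<k. (r * \<alpha> j)\<^sup>2 / (2 * (1 - 2 * t * \<sigma>\<^sup>2))))"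
    using nn_integral_PiM_normal_exp_quadratic[where \<sigma>=1 and c="t * \<sigma>\<^sup>2" and m=k
        and b="\<lambda>j. r * \<alpha> j"] t
    by (simp add: mult.assoc)
  also have "(\<Sum>j<k. (r * \<alpha> j)\<^sup>2 / (2 * (1 - 2 * t * \<sigma>\<^sup>2))) =
             t * (\<Sum>j<k. (\<alpha> j)\<^sup>2) / (1 - 2 * t * \<sigma>\<^sup>2)"
  proof -
    have "(r * \<alpha> j)\<^sup>2 / (2 * (1 - 2 * t * \<sigma>\<^sup>2)) = t * (\<alpha> j)\<^sup>2 / (1 - 2 * t * \<sigma>\<^sup>2)" for j
      using q by (simp add: power_mult_distrib r2 field_simps)
    then show ?thesis by (simp add: sum_divide_distrib sum_distrib_left)
  qed
  finally show ?thesis .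
qed

lemma nn_integral_exp_neg_sum_sq_shift:
  fixes \<sigma> t :: real and s xt :: "nat \<Rightarrow> real"
  assumes \<sigma>: "\<sigma> > 0" and t: "t \<ge> 0" and orth: "(\<Sum>i<D. s i * xt i) = 0"
  defines "q \<equiv> 1 + 2 * t * \<sigma>\<^sup>2" and "A \<equiv> \<Sum>i<D. (xt i)\<^sup>2"
  shows "(\<integral>\<^sup>+n. ennreal (exp (- t * (\<Sum>i<D. (xt i + n i)\<^sup>2) + (\<Sum>i<D. s i * n i)))
            \<partial>PiM {..<D} (\<lambda>_. normal_measure \<sigma>)) =
    ennreal ((1 / sqrt q) ^ D * exp (- t * A / q + \<sigma>\<^sup>2 / (2 * q) * (\<Sum>i<D. (s i)\<^sup>2)))"
proof -
  have q: "q > 0" unfolding q_def using t by (simp add: add_pos_nonneg)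
  have expand: "- t * (\<Sum>i<D. (xt i + n i)\<^sup>2) + (\<Sum>i<D. s i * n i) =
      - t * A + (\<Sum>i<D. (s i - 2 * t * xt i) * n i + (- t) * (n i)\<^sup>2)" for n
    unfolding A_def
    by (simp add: power2_eq_square algebra_simps sum.distrib sum_distrib_left sum_subtractf
        sum_negf)
  have "(\<Sum>i<D. (s i - 2 * t * xt i)\<^sup>2) =
        (\<Sum>i<D. (s i)\<^sup>2) - 4 * t * (\<Sum>i<D. s i * xt i) + 4 * t\<^sup>2 * A"
    unfolding A_def
    by (simp add: power2_eq_square algebra_simps sum.distrib sum_subtractf sum_distrib_left)
  then have "(\<Sum>i<D. (s i - 2 * t * xt i)\<^sup>2) = (\<Sum>i<D. (s i)\<^sup>2) + 4 * t\<^sup>2 * A"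
    using orth by simp
  moreover have "- t * A + (B + 4 * t\<^sup>2 * A) * \<sigma>\<^sup>2 / (2 * q) = - t * A / q + \<sigma>\<^sup>2 / (2 * q) * B"
    for B
  proof -
    have "- t * A + (B + 4 * t\<^sup>2 * A) * \<sigma>\<^sup>2 / (2 * q) =
          (- t * A * (2 * q) + (B + 4 * t\<^sup>2 * A) * \<sigma>\<^sup>2) / (2 * q)"
      using q by (simp add: field_simps)
    also have "- t * A * (2 * q) + (B + 4 * t\<^sup>2 * A) * \<sigma>\<^sup>2 = - 2 * t * A + \<sigma>\<^sup>2 * B"
      unfolding q_def by (simp add: algebra_simps power2_eq_square)
    finally show ?thesis using q by (simp add: field_simps)
  qed
  ultimately have completed: "- t * A + (\<Sum>i<D. (s i - 2 * t * xt i)\<^sup>2 * \<sigma>\<^sup>2 / (2 * q)) =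
      - t * A / q + \<sigma>\<^sup>2 / (2 * q) * (\<Sum>i<D. (s i)\<^sup>2)"
    by (simp only: sum_divide_distrib[symmetric] sum_distrib_right[symmetric])
  have "(\<integral>\<^sup>+n. ennreal (exp (- t * (\<Sum>i<D. (xt i + n i)\<^sup>2) + (\<Sum>i<D. s i * n i)))
            \<partial>PiM {..<D} (\<lambda>_. normal_measure \<sigma>)) =
        ennreal (exp (- t * A)) * (\<integral>\<^sup>+n. ennreal (exp (\<Sum>i<D. (s i - 2 * t * xt i) * n i + (- t) * (n i)\<^sup>2))
            \<partial>PiM {..<D} (\<lambda>_. normal_measure \<sigma>))"
    unfolding expand exp_add ennreal_mult'[OF exp_ge_zero]
    by (rule nn_integral_cmult) measurable
  also have "\<dots> = ennreal (exp (- t * A)) * ennreal ((1 / sqrt q) ^ D *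
                    exp (\<Sum>i<D. (s i - 2 * t * xt i)\<^sup>2 * \<sigma>\<^sup>2 / (2 * q)))"
    using nn_integral_PiM_normal_exp_quadratic[OF \<sigma>, where c="- t" and m=D
        and b="\<lambda>i. s i - 2 * t * xt i"] q
    by (simp add: q_def)
  also have "\<dots> = ennreal ((1 / sqrt q) ^ D *
           (exp (- t * A) * exp (\<Sum>i<D. (s i - 2 * t * xt i)\<^sup>2 * \<sigma>\<^sup>2 / (2 * q))))"
    by (simp add: mult_ac flip: ennreal_mult')
  finally show ?thesis unfolding exp_add[symmetric] completed .
qed

text \<open>For the lower tail the squares enter as \<open>exp (- t a\<^sup>2)\<close>, which a real Gaussian cannot
  linearise. Instead the squared distance is written as \<open>|x\<^sub>\<bottom> + n|\<^sup>2 - \<Sum>j<d. \<langle>e j, n\<rangle>\<^sup>2\<close>: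
  the first term factorises over coordinates, and the subtracted squares appear with a
  positive sign in the exponent.\<close>
lemma nn_integral_exp_neg_residual:
  fixes \<sigma> t :: real and xt :: "nat \<Rightarrow> real"
  assumes \<sigma>: "\<sigma> > 0" and t: "t \<ge> 0" and e: "orthonormal D d e" and "d \<le> D"
    and xe: "\<And>j. j < d \<Longrightarrow> vinner D (e j) xt = 0"
  shows "(\<integral>\<^sup>+n. ennreal (exp (- t * ((\<Sum>i<D. (xt i + n i)\<^sup>2) - (\<Sum>j<d. (vinner D (e j) n)\<^sup>2))))
            \<partial>PiM {..<D} (\<lambda>_. normal_measure \<sigma>)) =
    ennreal ((1 / sqrt (1 + 2 * t * \<sigma>\<^sup>2)) ^ (D - d) *
             exp (- t * (\<Sum>i<D. (xt i)\<^sup>2) / (1 + 2 * t * \<sigma>\<^sup>2)))"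
proof -
  define r where "r = sqrt (2 * t)"
  define q where "q = 1 + 2 * t * \<sigma>\<^sup>2"
  define A where "A = (\<Sum>i<D. (xt i)\<^sup>2)"
  have "q > 0" using t unfolding q_def by (simp add: add_pos_nonneg)
  then have q: "q > 0" "1 - 2 * (t * \<sigma>\<^sup>2 / q) * 1\<^sup>2 = 1 / q" "2 * (t * \<sigma>\<^sup>2 / q) * 1\<^sup>2 < 1"
    unfolding q_def by (simp_all add: field_simps)
  have inner: "(\<integral>\<^sup>+n. ennreal (exp (- t * (\<Sum>i<D. (xt i + n i)\<^sup>2) +
                   (\<Sum>i<D. r * (\<Sum>j<d. g j * e j i) * n i))) \<partial>PiM {..<D} (\<lambda>_. normal_measure \<sigma>)) =
               ennreal ((1 / sqrt q) ^ D * exp (- t * A / q)) *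
               ennreal (exp (\<Sum>j<d. 0 * g j + t * \<sigma>\<^sup>2 / q * (g j)\<^sup>2))" for g
  proof -
    have "(\<Sum>i<D. r * (\<Sum>j<d. g j * e j i) * xt i) = r * (\<Sum>j<d. g j * vinner D (e j) xt)"
      by (simp add: vinner_def algebra_simps sum_distrib_left sum_distrib_right
          sum.swap[of _ "{..<D}"])
    then have orth: "(\<Sum>i<D. r * (\<Sum>j<d. g j * e j i) * xt i) = 0" using xe by simp
    have S: "(\<Sum>i<D. (r * (\<Sum>j<d. g j * e j i))\<^sup>2) = 2 * t * (\<Sum>j<d. (g j)\<^sup>2)"
      using t by (simp add: r_def power_mult_distrib sum_distrib_left[symmetric]
          sum_sq_orthonormal_comb[OF e])
    have sq: "\<sigma>\<^sup>2 / (2 * q) * (\<Sum>i<D. (r * (\<Sum>j<d. g j * e j i))\<^sup>2) =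
                   (\<Sum>j<d. 0 * g j + t * \<sigma>\<^sup>2 / q * (g j)\<^sup>2)"
    proof -
      have "\<sigma>\<^sup>2 / (2 * q) * (2 * t * (\<Sum>j<d. (g j)\<^sup>2)) = (\<Sum>j<d. 0 * g j + t * \<sigma>\<^sup>2 / q * (g j)\<^sup>2)"
        unfolding sum_distrib_left using q by (intro sum.cong) (simp_all add: field_simps)
      then show ?thesis unfolding S .
    qed
    have "(\<integral>\<^sup>+n. ennreal (exp (- t * (\<Sum>i<D. (xt i + n i)\<^sup>2) +
                   (\<Sum>i<D. r * (\<Sum>j<d. g j * e j i) * n i))) \<partial>PiM {..<D} (\<lambda>_. normal_measure \<sigma>)) =
          ennreal ((1 / sqrt q) ^ D * exp (- t * A / q +
             \<sigma>\<^sup>2 / (2 * q) * (\<Sum>i<D. (r * (\<Sum>j<d. g j * e j i))\<^sup>2)))"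
      using nn_integral_exp_neg_sum_sq_shift[OF \<sigma> t orth] unfolding q_def A_def .
    also have "\<dots> = ennreal ((1 / sqrt q) ^ D * exp (- t * A / q)) *
               ennreal (exp (\<Sum>j<d. 0 * g j + t * \<sigma>\<^sup>2 / q * (g j)\<^sup>2))"
      unfolding sq exp_add using q by (simp add: mult.assoc flip: ennreal_mult')
    finally show ?thesis .
  qed
  have "(\<integral>\<^sup>+n. ennreal (exp (- t * ((\<Sum>i<D. (xt i + n i)\<^sup>2) - (\<Sum>j<d. (vinner D (e j) n)\<^sup>2))))
            \<partial>PiM {..<D} (\<lambda>_. normal_measure \<sigma>)) =
        (\<integral>\<^sup>+g. ennreal ((1 / sqrt q) ^ D * exp (- t * A / q)) *
               ennreal (exp (\<Sum>j<d. 0 * g j + t * \<sigma>\<^sup>2 / q * (g j)\<^sup>2)) \<partial>PiM {..<d} (\<lambda>_. normal_measure 1))"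
  proof -
    have "(\<integral>\<^sup>+n. ennreal (exp (- t * ((\<Sum>i<D. (xt i + n i)\<^sup>2) - (\<Sum>j<d. (vinner D (e j) n)\<^sup>2))))
            \<partial>PiM {..<D} (\<lambda>_. normal_measure \<sigma>)) =
          (\<integral>\<^sup>+n. ennreal (exp (- t * (\<Sum>i<D. (xt i + n i)\<^sup>2) +
             t * (\<Sum>j<d. (0 + vinner D (e j) n)\<^sup>2))) \<partial>PiM {..<D} (\<lambda>_. normal_measure \<sigma>))"
      by (simp add: algebra_simps)
    also have "\<dots> = (\<integral>\<^sup>+g. ennreal (exp (\<Sum>j<d. r * 0 * g j)) *
       (\<integral>\<^sup>+n. ennreal (exp (- t * (\<Sum>i<D. (xt i + n i)\<^sup>2) + (\<Sum>i<D. r * (\<Sum>j<d. g j * e j i) * n i)))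
          \<partial>PiM {..<D} (\<lambda>_. normal_measure \<sigma>)) \<partial>PiM {..<d} (\<lambda>_. normal_measure 1))"
      unfolding r_def by (rule nn_integral_exp_sum_sq_projections_linearised[OF \<sigma> t]) measurable
    finally show ?thesis unfolding inner by simp
  qed
  also have "\<dots> = ennreal ((1 / sqrt q) ^ D * exp (- t * A / q)) * ennreal ((1 / sqrt (1 / q)) ^ d)"
    using nn_integral_PiM_normal_exp_quadratic[where \<sigma>=1 and c="t * \<sigma>\<^sup>2 / q" and m=d
        and b="\<lambda>_. 0"] q
    by (subst nn_integral_cmult) simp_all
  also have "(1 / sqrt q) ^ D * (1 / sqrt (1 / q)) ^ d = (1 / sqrt q) ^ (D - d)"
  proof -
    have "(1 / sqrt q) ^ D = (1 / sqrt q) ^ (D - d) * (1 / sqrt q) ^ d"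
      using \<open>d \<le> D\<close> by (simp flip: power_add)
    moreover have "(1 / sqrt q) ^ d * (1 / sqrt (1 / q)) ^ d = 1"
      using q by (simp add: real_sqrt_divide flip: power_mult_distrib)
    ultimately show ?thesis by simp
  qed
  ultimately show ?thesis
    using q by (simp add: q_def A_def ennreal_mult'[symmetric] mult_ac)
qed

lemma measure_ge_le_mgf_bound:
  assumes "prob_space M" "s > 0" and [measurable]: "f \<in> borel_measurable M"
    and mgf: "(\<integral>\<^sup>+x. ennreal (exp (s * f x)) \<partial>M) = ennreal B" and "B \<ge> 0"
  shows "measure M {x \<in> space M. a \<le> f x} \<le> exp (- s * a) * B"
proof -
  interpret prob_space M by fact
  have "emeasure M {x \<in> space M. a \<le> f x} \<le>
        ennreal (exp (- s * a)) * (\<integral>\<^sup>+x. ennreal (exp (s * f x)) * indicator (space M) x \<partial>M)"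
    by (rule Chernoff_ineq_nn_integral_ge) (use assms in auto)
  also have "(\<integral>\<^sup>+x. ennreal (exp (s * f x)) * indicator (space M) x \<partial>M) = ennreal B"
    by (subst mgf[symmetric]) (intro nn_integral_cong, simp)
  finally show ?thesis
    using \<open>B \<ge> 0\<close> by (simp add: emeasure_eq_measure ennreal_mult'[symmetric] ennreal_le_iff)
qed

lemma inv_sqrt_power_eq_exp:
  fixes x :: real assumes "x > 0"
  shows "(1 / sqrt x) ^ k = exp (- (real k / 2) * ln x)"
proof -
  have "1 / sqrt x = exp (- (ln x / 2))"
    using assms by (simp add: exp_minus powr_half_sqrt[symmetric] powr_def field_simps)
  then show ?thesis by (simp add: exp_of_nat_mult[symmetric] algebra_simps)
qed

lemma chernoff_exponent_upper:
  fixes \<epsilon> k a :: real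
  assumes "0 < \<epsilon>" "\<epsilon> < 1" "k \<ge> 0" "a \<ge> 0"
  shows "- (\<epsilon> / 4) * (1 + 2 * \<epsilon>) * (k + a) - (k / 2) * ln (1 - \<epsilon> / 2) + (\<epsilon> / 4) * a / (1 - \<epsilon> / 2)
     \<le> - \<epsilon>\<^sup>2 * k / 4"
proof -
  have L: "- (\<epsilon> / 2) - 2 * (\<epsilon> / 2)\<^sup>2 \<le> ln (1 - \<epsilon> / 2)"
    by (rule ln_one_minus_pos_lower_bound) (use assms in auto)
  have ln: "- (k / 2) * ln (1 - \<epsilon> / 2) \<le> (k / 2) * (\<epsilon> / 2 + 2 * (\<epsilon> / 2)\<^sup>2)"
    using mult_left_mono[OF L, of "k / 2"] assms by (simp add: algebra_simps)
  have "1 / (1 - \<epsilon> / 2) \<le> 1 + \<epsilon>"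
    using assms by (simp add: field_simps)
  then have frac: "(\<epsilon> / 4) * a / (1 - \<epsilon> / 2) \<le> (\<epsilon> / 4) * a * (1 + \<epsilon>)"
    using assms mult_left_mono[of "1 / (1 - \<epsilon> / 2)" "1 + \<epsilon>" "(\<epsilon> / 4) * a"] by simp
  have "- (\<epsilon> / 4) * (1 + 2 * \<epsilon>) * (k + a) - (k / 2) * ln (1 - \<epsilon> / 2) + (\<epsilon> / 4) * a / (1 - \<epsilon> / 2)
     \<le> - (\<epsilon> / 4) * (1 + 2 * \<epsilon>) * (k + a) + (k / 2) * (\<epsilon> / 2 + 2 * (\<epsilon> / 2)\<^sup>2) + (\<epsilon> / 4) * a * (1 + \<epsilon>)"
    using ln frac by linarith
  also have "\<dots> = - \<epsilon>\<^sup>2 * k / 4 - \<epsilon>\<^sup>2 * a / 4"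
    by (simp add: field_simps power2_eq_square)
  also have "\<dots> \<le> - \<epsilon>\<^sup>2 * k / 4" using assms by simp
  finally show ?thesis .
qed

lemma chernoff_exponent_lower:
  fixes \<epsilon> k a :: real
  assumes "0 < \<epsilon>" "\<epsilon> < 1" "k \<ge> 0" "a \<ge> 0"
  shows "(\<epsilon> / 4) * (1 - \<epsilon>) * (k + a) - (k / 2) * ln (1 + \<epsilon> / 2) - (\<epsilon> / 4) * a / (1 + \<epsilon> / 2)
     \<le> - \<epsilon>\<^sup>2 * k / 8"
proof -
  have L: "\<epsilon> / 2 - (\<epsilon> / 2)\<^sup>2 \<le> ln (1 + \<epsilon> / 2)"
    by (rule ln_one_plus_pos_lower_bound) (use assms in auto)
  have ln: "- (k / 2) * ln (1 + \<epsilon> / 2) \<le> - (k / 2) * (\<epsilon> / 2 - (\<epsilon> / 2)\<^sup>2)"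
    using mult_left_mono[OF L, of "k / 2"] assms by (simp add: algebra_simps)
  have "1 - \<epsilon> / 2 \<le> 1 / (1 + \<epsilon> / 2)"
    using assms by (simp add: field_simps)
  then have frac: "(\<epsilon> / 4) * a * (1 - \<epsilon> / 2) \<le> (\<epsilon> / 4) * a / (1 + \<epsilon> / 2)"
    using assms mult_left_mono[of "1 - \<epsilon> / 2" "1 / (1 + \<epsilon> / 2)" "(\<epsilon> / 4) * a"] by simp
  have "(\<epsilon> / 4) * (1 - \<epsilon>) * (k + a) - (k / 2) * ln (1 + \<epsilon> / 2) - (\<epsilon> / 4) * a / (1 + \<epsilon> / 2)
     \<le> (\<epsilon> / 4) * (1 - \<epsilon>) * (k + a) - (k / 2) * (\<epsilon> / 2 - (\<epsilon> / 2)\<^sup>2) - (\<epsilon> / 4) * a * (1 - \<epsilon> / 2)"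
    using ln frac by linarith
  also have "\<dots> = - \<epsilon>\<^sup>2 * k / 8 - \<epsilon>\<^sup>2 * a / 8"
    by (simp add: field_simps power2_eq_square)
  also have "\<dots> \<le> - \<epsilon>\<^sup>2 * k / 8" using assms by simp
  finally show ?thesis .
qed

lemma prob_sum_sq_projections_ge:
  fixes \<sigma> \<epsilon> :: real and \<alpha> :: "nat \<Rightarrow> real"
  assumes \<sigma>: "\<sigma> > 0" and \<epsilon>: "0 < \<epsilon>" "\<epsilon> < 1" and u: "orthonormal D k u"
  defines "G \<equiv> PiM {..<D} (\<lambda>_. normal_measure \<sigma>)"
  shows "measure G {n \<in> space G. (1 + 2 * \<epsilon>) * (\<sigma>\<^sup>2 * real k + (\<Sum>j<k. (\<alpha> j)\<^sup>2)) \<le>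
                                  (\<Sum>j<k. (\<alpha> j + vinner D (u j) n)\<^sup>2)}
    \<le> exp (- \<epsilon>\<^sup>2 * real k / 4)"
proof -
  define A where "A = (\<Sum>j<k. (\<alpha> j)\<^sup>2)"
  define T where "T = (1 + 2 * \<epsilon>) * (\<sigma>\<^sup>2 * real k + A)"
  define lam where "lam = \<epsilon> / (4 * \<sigma>\<^sup>2)"
  have lam: "lam > 0" "2 * lam * \<sigma>\<^sup>2 = \<epsilon> / 2" using \<sigma> \<epsilon> unfolding lam_def by auto
  have A: "A \<ge> 0" unfolding A_def by (simp add: sum_nonneg)
  have P: "prob_space G" unfolding G_def by (rule prob_space_PiM_normal_measure[OF \<sigma>])
  have meas: "(\<lambda>n. \<Sum>j<k. (\<alpha> j + vinner D (u j) n)\<^sup>2) \<in> borel_measurable G"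
    unfolding G_def vinner_def by measurable
  have mgf: "(\<integral>\<^sup>+n. ennreal (exp (lam * (\<Sum>j<k. (\<alpha> j + vinner D (u j) n)\<^sup>2))) \<partial>G) =
      ennreal ((1 / sqrt (1 - 2 * lam * \<sigma>\<^sup>2)) ^ k * exp (lam * A / (1 - 2 * lam * \<sigma>\<^sup>2)))"
    unfolding G_def A_def by (rule nn_integral_exp_sum_sq_projections[OF \<sigma> _ _ u]) (use lam \<epsilon> in auto)
  have "measure G {n \<in> space G. T \<le> (\<Sum>j<k. (\<alpha> j + vinner D (u j) n)\<^sup>2)} \<le>
        exp (- lam * T) * ((1 / sqrt (1 - 2 * lam * \<sigma>\<^sup>2)) ^ k * exp (lam * A / (1 - 2 * lam * \<sigma>\<^sup>2)))"
    by (rule measure_ge_le_mgf_bound[OF P lam(1) meas mgf]) (use lam \<epsilon> in simp)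
  also have "\<dots> = exp (- (\<epsilon> / 4) * (1 + 2 * \<epsilon>) * (real k + A / \<sigma>\<^sup>2) - (real k / 2) * ln (1 - \<epsilon> / 2)
                      + (\<epsilon> / 4) * (A / \<sigma>\<^sup>2) / (1 - \<epsilon> / 2))"
  proof -
    have "(1 / sqrt (1 - 2 * lam * \<sigma>\<^sup>2)) ^ k = exp (- (real k / 2) * ln (1 - \<epsilon> / 2))"
      unfolding lam(2) by (rule inv_sqrt_power_eq_exp) (use \<epsilon> in simp)
    moreover have "- lam * T = - (\<epsilon> / 4) * (1 + 2 * \<epsilon>) * (real k + A / \<sigma>\<^sup>2)"
      unfolding lam_def T_def using \<sigma> by (simp add: field_simps)
    moreover have "lam * A / (1 - 2 * lam * \<sigma>\<^sup>2) = (\<epsilon> / 4) * (A / \<sigma>\<^sup>2) / (1 - \<epsilon> / 2)"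
      unfolding lam(2) unfolding lam_def using \<sigma> by (simp add: field_simps)
    ultimately have "exp (- lam * T) * ((1 / sqrt (1 - 2 * lam * \<sigma>\<^sup>2)) ^ k *
                       exp (lam * A / (1 - 2 * lam * \<sigma>\<^sup>2))) =
        exp (- (\<epsilon> / 4) * (1 + 2 * \<epsilon>) * (real k + A / \<sigma>\<^sup>2)) *
        (exp (- (real k / 2) * ln (1 - \<epsilon> / 2)) * exp ((\<epsilon> / 4) * (A / \<sigma>\<^sup>2) / (1 - \<epsilon> / 2)))"
      by simp
    then show ?thesis
      by (simp only: exp_add[symmetric] mult.assoc add.assoc minus_mult_left[symmetric] diff_conv_add_uminus)
  qed
  also have "\<dots> \<le> exp (- \<epsilon>\<^sup>2 * real k / 4)"
    using chernoff_exponent_upper[OF \<epsilon>, of "real k" "A / \<sigma>\<^sup>2"] A \<sigma> by simp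
  finally show ?thesis unfolding T_def A_def .
qed

lemma prob_residual_le:
  fixes \<sigma> \<epsilon> :: real and xt :: "nat \<Rightarrow> real"
  assumes \<sigma>: "\<sigma> > 0" and \<epsilon>: "0 < \<epsilon>" "\<epsilon> < 1" and e: "orthonormal D d e" and "d \<le> D"
    and xe: "\<And>j. j < d \<Longrightarrow> vinner D (e j) xt = 0"
  defines "G \<equiv> PiM {..<D} (\<lambda>_. normal_measure \<sigma>)"
  shows "measure G {n \<in> space G. (\<Sum>i<D. (xt i + n i)\<^sup>2) - (\<Sum>j<d. (vinner D (e j) n)\<^sup>2) \<le>
                                  (1 - \<epsilon>) * (\<sigma>\<^sup>2 * real (D - d) + (\<Sum>i<D. (xt i)\<^sup>2))}
    \<le> exp (- \<epsilon>\<^sup>2 * real (D - d) / 8)"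
proof -
  define A where "A = (\<Sum>i<D. (xt i)\<^sup>2)"
  define k where "k = D - d"
  define T where "T = (1 - \<epsilon>) * (\<sigma>\<^sup>2 * real k + A)"
  define Y where "Y n = (\<Sum>i<D. (xt i + n i)\<^sup>2) - (\<Sum>j<d. (vinner D (e j) n)\<^sup>2)" for n
  define lam where "lam = \<epsilon> / (4 * \<sigma>\<^sup>2)"
  have lam: "lam > 0" "2 * lam * \<sigma>\<^sup>2 = \<epsilon> / 2" using \<sigma> \<epsilon> unfolding lam_def by auto
  have A: "A \<ge> 0" unfolding A_def by (simp add: sum_nonneg)
  have "{n \<in> space G. Y n \<le> T} = {n \<in> space G. - T \<le> - Y n}" by auto
  have P: "prob_space G" unfolding G_def by (rule prob_space_PiM_normal_measure[OF \<sigma>])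
  have meas: "(\<lambda>n. - Y n) \<in> borel_measurable G"
    unfolding G_def Y_def vinner_def by measurable
  have mgf: "(\<integral>\<^sup>+n. ennreal (exp (lam * - Y n)) \<partial>G) =
      ennreal ((1 / sqrt (1 + 2 * lam * \<sigma>\<^sup>2)) ^ k * exp (- lam * A / (1 + 2 * lam * \<sigma>\<^sup>2)))"
    using nn_integral_exp_neg_residual[OF \<sigma> less_imp_le[OF lam(1)] e \<open>d \<le> D\<close> xe]
    unfolding G_def Y_def A_def k_def by (simp only: mult_minus_right minus_mult_left)
  have "{n \<in> space G. Y n \<le> T} = {n \<in> space G. - T \<le> - Y n}" by auto
  also have "measure G \<dots> \<le>
        exp (- lam * - T) * ((1 / sqrt (1 + 2 * lam * \<sigma>\<^sup>2)) ^ k * exp (- lam * A / (1 + 2 * lam * \<sigma>\<^sup>2)))"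
    by (rule measure_ge_le_mgf_bound[OF P lam(1) meas mgf]) (use lam in simp)
  also have "\<dots> = exp ((\<epsilon> / 4) * (1 - \<epsilon>) * (real k + A / \<sigma>\<^sup>2) - (real k / 2) * ln (1 + \<epsilon> / 2)
                      - (\<epsilon> / 4) * (A / \<sigma>\<^sup>2) / (1 + \<epsilon> / 2))"
  proof -
    have "(1 / sqrt (1 + 2 * lam * \<sigma>\<^sup>2)) ^ k = exp (- (real k / 2) * ln (1 + \<epsilon> / 2))"
      unfolding lam(2) by (rule inv_sqrt_power_eq_exp) (use \<epsilon> in simp)
    moreover have "- lam * - T = (\<epsilon> / 4) * (1 - \<epsilon>) * (real k + A / \<sigma>\<^sup>2)"
      unfolding lam_def T_def using \<sigma> by (simp add: field_simps)
    moreover have "- lam * A / (1 + 2 * lam * \<sigma>\<^sup>2) = - ((\<epsilon> / 4) * (A / \<sigma>\<^sup>2) / (1 + \<epsilon> / 2))"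
      unfolding lam(2) unfolding lam_def using \<sigma> by (simp add: field_simps)
    ultimately have "exp (- lam * - T) * ((1 / sqrt (1 + 2 * lam * \<sigma>\<^sup>2)) ^ k *
                       exp (- lam * A / (1 + 2 * lam * \<sigma>\<^sup>2))) =
        exp ((\<epsilon> / 4) * (1 - \<epsilon>) * (real k + A / \<sigma>\<^sup>2)) *
        (exp (- (real k / 2) * ln (1 + \<epsilon> / 2)) * exp (- ((\<epsilon> / 4) * (A / \<sigma>\<^sup>2) / (1 + \<epsilon> / 2))))"
      by simp
    then show ?thesis
      by (simp only: exp_add[symmetric] mult.assoc add.assoc minus_mult_left[symmetric] diff_conv_add_uminus)
  qed
  also have "\<dots> \<le> exp (- \<epsilon>\<^sup>2 * real k / 8)"
    using chernoff_exponent_lower[OF \<epsilon>, of "real k" "A / \<sigma>\<^sup>2"] A \<sigma> by simp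
  finally show ?thesis unfolding T_def A_def Y_def k_def .
qed

lemma sum_atLeastLessThan_shift: "(d::nat) \<le> D \<Longrightarrow> (\<Sum>j\<in>{d..<D}. g j) = (\<Sum>j<D - d. g (d + j))"
  using sum.shift_bounds_nat_ivl[of g 0 d "D - d"] by (simp add: atLeast0LessThan add.commute)

lemma prob_sdist_sq_ge:
  assumes f: "adapted_basis D d S f" and S: "lin_subspace D S"
    and \<sigma>: "\<sigma> > 0" and \<epsilon>: "0 < \<epsilon>" "\<epsilon> < 1"
  shows "measure (gauss_noise D \<sigma>) {n \<in> space (gauss_noise D \<sigma>).
      (1 + 2 * \<epsilon>) * (\<sigma>\<^sup>2 * real (D - d) + (sdist D x S)\<^sup>2) \<le> (sdist D (\<lambda>i. x i + n i) S)\<^sup>2}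
    \<le> exp (- \<epsilon>\<^sup>2 * real (D - d) / 4)"
proof -
  have on: "orthonormal D D f" and "d \<le> D" using f unfolding adapted_basis_def by auto
  define u where "u j = f (d + j)" for j
  define \<alpha> where "\<alpha> j = vinner D (f (d + j)) x" for j
  have u: "orthonormal D (D - d) u"
    using on unfolding orthonormal_def u_def by auto
  have "(sdist D (\<lambda>i. x i + n i) S)\<^sup>2 = (\<Sum>j<D - d. (\<alpha> j + vinner D (u j) n)\<^sup>2)" for n
    unfolding sdist_sq_adapted_basis[OF f S] vinner_add_right sum_atLeastLessThan_shift[OF \<open>d \<le> D\<close>]
      \<alpha>_def u_def ..
  moreover have "(sdist D x S)\<^sup>2 = (\<Sum>j<D - d. (\<alpha> j)\<^sup>2)"
    unfolding sdist_sq_adapted_basis[OF f S] sum_atLeastLessThan_shift[OF \<open>d \<le> D\<close>] \<alpha>_def ..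
  ultimately show ?thesis
    using prob_sum_sq_projections_ge[OF \<sigma> \<epsilon> u, of \<alpha>] unfolding gauss_noise_def by simp
qed

lemma prob_sdist_sq_le:
  assumes f: "adapted_basis D d S f" and S: "lin_subspace D S"
    and \<sigma>: "\<sigma> > 0" and \<epsilon>: "0 < \<epsilon>" "\<epsilon> < 1"
  shows "measure (gauss_noise D \<sigma>) {n \<in> space (gauss_noise D \<sigma>).
      (sdist D (\<lambda>i. x i + n i) S)\<^sup>2 \<le> (1 - \<epsilon>) * (\<sigma>\<^sup>2 * real (D - d) + (sdist D x S)\<^sup>2)}
    \<le> exp (- \<epsilon>\<^sup>2 * real (D - d) / 8)"
proof -
  have on: "orthonormal D D f" and "d \<le> D"
    and complete: "\<And>z i. i < D \<Longrightarrow> z i = (\<Sum>j<D. vinner D (f j) z * f j i)"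
    using f unfolding adapted_basis_def by auto
  define xt where "xt = (\<lambda>i. \<Sum>j\<in>{d..<D}. vinner D (f j) x * f j i)"
  have xt: "vinner D (f l) xt = (if d \<le> l then vinner D (f l) x else 0)" if "l < D" for l
    using vinner_orthonormal_comb[OF on that, of "{d..<D}" "\<lambda>j. vinner D (f j) x"] that
    unfolding xt_def by (auto simp: subset_eq)
  have on_d: "orthonormal D d f" using on \<open>d \<le> D\<close> unfolding orthonormal_def by auto
  have xt_perp: "vinner D (f j) xt = 0" if "j < d" for j
    using xt[of j] that \<open>d \<le> D\<close> by simp
  have "(\<Sum>i<D. (xt i + n i)\<^sup>2) - (\<Sum>j<d. (vinner D (f j) n)\<^sup>2) = (sdist D (\<lambda>i. x i + n i) S)\<^sup>2" for n
  proof -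
    have "(\<Sum>i<D. (xt i + n i)\<^sup>2) = (\<Sum>l<D. (vinner D (f l) xt + vinner D (f l) n)\<^sup>2)"
      using parseval[OF complete, of "\<lambda>i. xt i + n i"] by (simp add: vinner_add_right)
    also have "\<dots> = (\<Sum>l<d. (vinner D (f l) n)\<^sup>2) +
                     (\<Sum>l\<in>{d..<D}. (vinner D (f l) x + vinner D (f l) n)\<^sup>2)"
      unfolding sum_lessThan_split[OF \<open>d \<le> D\<close>] using xt xt_perp by simp
    finally show ?thesis
      unfolding sdist_sq_adapted_basis[OF f S] vinner_add_right by simp
  qed
  moreover have "(\<Sum>i<D. (xt i)\<^sup>2) = (sdist D x S)\<^sup>2"
  proof -
    have "(\<Sum>i<D. (xt i)\<^sup>2) = (\<Sum>l<D. (vinner D (f l) xt)\<^sup>2)"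
      by (rule parseval[OF complete])
    also have "\<dots> = (\<Sum>l\<in>{d..<D}. (vinner D (f l) x)\<^sup>2)"
      unfolding sum_lessThan_split[OF \<open>d \<le> D\<close>] using xt xt_perp by simp
    finally show ?thesis unfolding sdist_sq_adapted_basis[OF f S] .
  qed
  ultimately show ?thesis
    using prob_residual_le[OF \<sigma> \<epsilon> on_d \<open>d \<le> D\<close> xt_perp] unfolding gauss_noise_def by simp
qed

definition sdist_sq_concentrated ::
    "nat \<Rightarrow> nat \<Rightarrow> real \<Rightarrow> real \<Rightarrow> (nat \<Rightarrow> real) set \<Rightarrow> (nat \<Rightarrow> real) \<Rightarrow> (nat \<Rightarrow> real) \<Rightarrow> bool"
  where "sdist_sq_concentrated D d \<sigma> \<epsilon> S x n \<longleftrightarrow>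
    (1 - \<epsilon>) * (\<sigma>\<^sup>2 * real (D - d) + (sdist D x S)\<^sup>2) < (sdist D (\<lambda>i. x i + n i) S)\<^sup>2 \<and>
    (sdist D (\<lambda>i. x i + n i) S)\<^sup>2 < (1 + 2 * \<epsilon>) * (\<sigma>\<^sup>2 * real (D - d) + (sdist D x S)\<^sup>2)"

lemma prob_not_sdist_sq_concentrated:
  assumes f: "adapted_basis D d S f" and S: "lin_subspace D S"
    and \<sigma>: "\<sigma> > 0" and \<epsilon>: "0 < \<epsilon>" "\<epsilon> < 1"
  shows "measure (gauss_noise D \<sigma>) {n \<in> space (gauss_noise D \<sigma>). \<not> sdist_sq_concentrated D d \<sigma> \<epsilon> S x n}
    \<le> 2 * exp (- \<epsilon>\<^sup>2 * real (D - d) / 8)"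
proof -
  define G where "G = gauss_noise D \<sigma>"
  define m where "m = \<sigma>\<^sup>2 * real (D - d) + (sdist D x S)\<^sup>2"
  note [measurable] = borel_measurable_sdist_translate[OF f S, of x \<sigma>]
  define E1 where "E1 = {n \<in> space G. (1 + 2 * \<epsilon>) * m \<le> (sdist D (\<lambda>i. x i + n i) S)\<^sup>2}"
  define E2 where "E2 = {n \<in> space G. (sdist D (\<lambda>i. x i + n i) S)\<^sup>2 \<le> (1 - \<epsilon>) * m}"
  have "{n \<in> space G. \<not> sdist_sq_concentrated D d \<sigma> \<epsilon> S x n} = E1 \<union> E2"
    unfolding E1_def E2_def m_def sdist_sq_concentrated_def by auto
  also have "measure G (E1 \<union> E2) \<le> measure G E1 + measure G E2"
    by (rule measure_Un_le) (simp_all add: E1_def E2_def G_def)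
  also have "measure G E1 \<le> exp (- \<epsilon>\<^sup>2 * real (D - d) / 8)"
    using prob_sdist_sq_ge[OF f S \<sigma> \<epsilon>, of x] unfolding E1_def G_def m_def
    by (rule order.trans) simp
  also have "measure G E2 \<le> exp (- \<epsilon>\<^sup>2 * real (D - d) / 8)"
    using prob_sdist_sq_le[OF f S \<sigma> \<epsilon>, of x] unfolding E2_def G_def m_def .
  finally show ?thesis unfolding G_def by simp
qed

section \<open>The affinity of a noisy point\<close>

lemma le_mult_sqrt_of_sq_less:
  fixes a \<epsilon> R :: real
  assumes "\<epsilon> \<ge> 0" "R > 0" "a\<^sup>2 < (1 + 2 * \<epsilon>) * R"
  shows "a \<le> (1 + \<epsilon>) * sqrt R"
proof (rule power2_le_imp_le)
  have "(1 + 2 * \<epsilon>) * R \<le> ((1 + \<epsilon>) * sqrt R)\<^sup>2"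
    using assms by (simp add: power_mult_distrib power2_eq_square algebra_simps)
  then show "a\<^sup>2 \<le> ((1 + \<epsilon>) * sqrt R)\<^sup>2" using assms(3) by linarith
qed (use assms in simp)

lemma mult_sqrt_le_of_less_sq:
  fixes a \<epsilon> R :: real
  assumes "0 \<le> \<epsilon>" "\<epsilon> \<le> 1" "R > 0" "a \<ge> 0" "(1 - \<epsilon>) * R < a\<^sup>2"
  shows "(1 - \<epsilon>) * sqrt R \<le> a"
proof (rule power2_le_imp_le)
  have "((1 - \<epsilon>) * sqrt R)\<^sup>2 = (1 - \<epsilon>) * (1 - \<epsilon>) * R"
    using assms by (simp add: power_mult_distrib power2_eq_square)
  also have "\<dots> \<le> (1 - \<epsilon>) * R"
    using assms by (intro mult_right_mono mult_left_le) auto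
  finally show "((1 - \<epsilon>) * sqrt R)\<^sup>2 \<le> a\<^sup>2" using assms(5) by linarith
qed fact

lemma ratio_bounds_of_sq_bounds:
  fixes a b P Q \<epsilon> :: real
  assumes \<epsilon>: "0 < \<epsilon>" "\<epsilon> < 1" and PQ: "P > 0" "Q > 0" and ab: "a \<ge> 0" "b \<ge> 0"
    and a: "(1 - \<epsilon>) * P < a\<^sup>2" "a\<^sup>2 < (1 + 2 * \<epsilon>) * P"
    and b: "(1 - \<epsilon>) * Q < b\<^sup>2" "b\<^sup>2 < (1 + 2 * \<epsilon>) * Q"
  shows "((1 - \<epsilon>) * sqrt P) / ((1 + \<epsilon>) * sqrt Q) \<le> a / b"
    and "a / b \<le> ((1 + \<epsilon>) * sqrt P) / ((1 - \<epsilon>) * sqrt Q)"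
proof -
  have aU: "a \<le> (1 + \<epsilon>) * sqrt P" and bU: "b \<le> (1 + \<epsilon>) * sqrt Q"
    using le_mult_sqrt_of_sq_less \<epsilon> PQ a(2) b(2) by auto
  have aL: "(1 - \<epsilon>) * sqrt P \<le> a" and bL: "(1 - \<epsilon>) * sqrt Q \<le> b"
    using mult_sqrt_le_of_less_sq \<epsilon> PQ ab a(1) b(1) by auto
  have "0 < (1 - \<epsilon>) * sqrt Q" using \<epsilon> PQ by simp
  then have "b > 0" using bL by linarith
  with \<open>0 < (1 - \<epsilon>) * sqrt Q\<close> show "((1 - \<epsilon>) * sqrt P) / ((1 + \<epsilon>) * sqrt Q) \<le> a / b"
    and "a / b \<le> ((1 + \<epsilon>) * sqrt P) / ((1 - \<epsilon>) * sqrt Q)"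
    using aU aL bU bL ab \<epsilon> PQ by (auto intro!: frac_le)
qed

lemma affinity_mu_bounds:
  assumes f1: "adapted_basis D d S1 f1" and S1: "lin_subspace D S1" and "x \<in> S1"
    and f2: "adapted_basis D d S2 f2" and S2: "lin_subspace D S2"
    and "D > d" "\<sigma> > 0" and \<epsilon>: "0 < \<epsilon>" "\<epsilon> < 1"
    and conc: "sdist_sq_concentrated D d \<sigma> \<epsilon> S1 x n" "sdist_sq_concentrated D d \<sigma> \<epsilon> S2 x n"
  defines "P \<equiv> \<sigma>\<^sup>2 * real (D - d)" and "Q \<equiv> \<sigma>\<^sup>2 * real (D - d) + (sdist D x S2)\<^sup>2"
  shows "1 - ((1 + \<epsilon>) * sqrt P) / ((1 - \<epsilon>) * sqrt Q) \<le> affinity_mu D S1 S2 (\<lambda>i. x i + n i)"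
    and "affinity_mu D S1 S2 (\<lambda>i. x i + n i) \<le> 1 - ((1 - \<epsilon>) * sqrt P) / ((1 + \<epsilon>) * sqrt Q)"
proof -
  have P: "P > 0" and Q: "Q > 0"
    using \<open>D > d\<close> \<open>\<sigma> > 0\<close> unfolding P_def Q_def by (simp_all add: add_pos_nonneg)
  have "sdist D x S1 = 0" by (rule sdist_eq_0_adapted_basis[OF f1 S1 \<open>x \<in> S1\<close>])
  then have "(1 - \<epsilon>) * P < (sdist D (\<lambda>i. x i + n i) S1)\<^sup>2"
    "(sdist D (\<lambda>i. x i + n i) S1)\<^sup>2 < (1 + 2 * \<epsilon>) * P"
    "(1 - \<epsilon>) * Q < (sdist D (\<lambda>i. x i + n i) S2)\<^sup>2"
    "(sdist D (\<lambda>i. x i + n i) S2)\<^sup>2 < (1 + 2 * \<epsilon>) * Q"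
    using conc unfolding sdist_sq_concentrated_def P_def Q_def by simp_all
  note bounds = ratio_bounds_of_sq_bounds[OF \<epsilon> P Q sdist_nonneg_adapted_basis[OF f1 S1]
      sdist_nonneg_adapted_basis[OF f2 S2] this]
  show "1 - ((1 + \<epsilon>) * sqrt P) / ((1 - \<epsilon>) * sqrt Q) \<le> affinity_mu D S1 S2 (\<lambda>i. x i + n i)"
    and "affinity_mu D S1 S2 (\<lambda>i. x i + n i) \<le> 1 - ((1 - \<epsilon>) * sqrt P) / ((1 + \<epsilon>) * sqrt Q)"
    using bounds unfolding affinity_mu_def by simp_all
qed

lemma prob_affinity_mu_bounds:
  assumes "D > d" "\<sigma> > 0" and S1: "subspace_of_dim D d S1" and S2: "subspace_of_dim D d S2"
    and "x \<in> S1" and \<epsilon>: "0 < \<epsilon>" "\<epsilon> < 1"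
  shows "measure (gauss_noise D \<sigma>)
      {n \<in> space (gauss_noise D \<sigma>).
         1 - ((1 + \<epsilon>) * sqrt (\<sigma>\<^sup>2 * real (D - d))) /
             ((1 - \<epsilon>) * sqrt (\<sigma>\<^sup>2 * real (D - d) + (sdist D x S2)\<^sup>2))
           \<le> affinity_mu D S1 S2 (\<lambda>i. x i + n i) \<and>
         affinity_mu D S1 S2 (\<lambda>i. x i + n i) \<le>
         1 - ((1 - \<epsilon>) * sqrt (\<sigma>\<^sup>2 * real (D - d))) /
             ((1 + \<epsilon>) * sqrt (\<sigma>\<^sup>2 * real (D - d) + (sdist D x S2)\<^sup>2))}
    \<ge> 1 - 4 * exp (- (1 / 8) * \<epsilon>\<^sup>2 * real (D - d))" (is "measure _ ?good \<ge> _")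
proof -
  have L1: "lin_subspace D S1" and L2: "lin_subspace D S2"
    using S1 S2 unfolding subspace_of_dim_def by auto
  obtain f1 f2 where f1: "adapted_basis D d S1 f1" and f2: "adapted_basis D d S2 f2"
    using adapted_basis_exists[OF S1] adapted_basis_exists[OF S2] by blast
  define G where "G = gauss_noise D \<sigma>"
  interpret G: prob_space G
    unfolding G_def gauss_noise_def by (rule prob_space_PiM_normal_measure[OF \<open>\<sigma> > 0\<close>])
  note [measurable] = borel_measurable_sdist_translate[OF f1 L1, of x \<sigma>]
    borel_measurable_sdist_translate[OF f2 L2, of x \<sigma>]
  define bad where "bad S = {n \<in> space G. \<not> sdist_sq_concentrated D d \<sigma> \<epsilon> S x n}" for S
  have bad_sets: "bad S1 \<in> sets G" "bad S2 \<in> sets G"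
    unfolding bad_def G_def sdist_sq_concentrated_def by measurable
  have "measure G (bad S1 \<union> bad S2) \<le> measure G (bad S1) + measure G (bad S2)"
    by (rule measure_Un_le[OF bad_sets])
  also have "measure G (bad S1) \<le> 2 * exp (- \<epsilon>\<^sup>2 * real (D - d) / 8)"
    unfolding bad_def G_def by (rule prob_not_sdist_sq_concentrated[OF f1 L1 \<open>\<sigma> > 0\<close> \<epsilon>])
  also have "measure G (bad S2) \<le> 2 * exp (- \<epsilon>\<^sup>2 * real (D - d) / 8)"
    unfolding bad_def G_def by (rule prob_not_sdist_sq_concentrated[OF f2 L2 \<open>\<sigma> > 0\<close> \<epsilon>])
  moreover have "measure G (space G - (bad S1 \<union> bad S2)) \<le> measure G ?good"
    using affinity_mu_bounds[OF f1 L1 \<open>x \<in> S1\<close> f2 L2 \<open>D > d\<close> \<open>\<sigma> > 0\<close> \<epsilon>]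
    by (intro G.finite_measure_mono) (auto simp: bad_def G_def affinity_mu_def)
  ultimately show ?thesis
    using G.prob_compl[of "bad S1 \<union> bad S2"] bad_sets unfolding G_def by simp
qed

theorem theorem1:
  shows "\<exists>c>0. \<forall>D d \<sigma> S1 S2 x \<epsilon>.
    D > d \<and> d \<ge> 1 \<and> \<sigma> > 0 \<and>
    subspace_of_dim D d S1 \<and> subspace_of_dim D d S2 \<and> x \<in> S1 \<and>
    0 < \<epsilon> \<and> \<epsilon> < 1 \<longrightarrow>
    measure (gauss_noise D \<sigma>)
      {n \<in> space (gauss_noise D \<sigma>).
         1 - ((1 + \<epsilon>) * sqrt (\<sigma>\<^sup>2 * real (D - d))) /
             ((1 - \<epsilon>) * sqrt (\<sigma>\<^sup>2 * real (D - d) + (sdist D x S2)\<^sup>2))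
           \<le> affinity_mu D S1 S2 (\<lambda>i. x i + n i) \<and>
         affinity_mu D S1 S2 (\<lambda>i. x i + n i) \<le>
         1 - ((1 - \<epsilon>) * sqrt (\<sigma>\<^sup>2 * real (D - d))) /
             ((1 + \<epsilon>) * sqrt (\<sigma>\<^sup>2 * real (D - d) + (sdist D x S2)\<^sup>2))}
    \<ge> 1 - 4 * exp (- c * \<epsilon>\<^sup>2 * real (D - d))"
  by (intro exI[of _ "1 / 8"] conjI allI impI) (simp, blast intro: prob_affinity_mu_bounds)

end
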